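(* In the setting of the context (any constant $\kappa$), if $E^{(\mathcal H)}$ and $E^{(\mathcal M)}_a$ vanish on every level surface $\Sigma_\sigma$ (i.e. on all of $M$), then $$K^{ab}E^{(\mathcal{EVOL})}_{ab}=0\qquad\text{and}\qquad D^aE^{(\mathcal{EVOL})}_{ab}-\epsilon\,\dot n^aE^{(\mathcal{EVOL})}_{ab}=0.$$
   Context: $M$ is an $(n+1)$-dimensional ($n\ge 2$) smooth manifold with a smooth metric $g_{ab}$ of Euclidean or Lorentzian signature and Levi-Civita connection $\nabla_a$, foliated by the level surfaces $\Sigma_\sigma$ of a smooth function $\sigma$ with nowhere vanishing gradient. $n^a$ is the unit normal with $n^an_a=\epsilon\in\{-1,+1\}$; $h_{ab}=g_{ab}-\epsilon n_an_b$, ${h^a}_b={\delta^a}_b-\epsilon n^an_b$; $D_a$ is the Levi-Civita connection of $h_{ab}$; $K_{ab}={h^e}_a\nabla_en_b$ is the extrinsic curvature and $\dot n_a=n^e\nabla_en_a$. $\mathcal{G}_{ab}$ is a smooth symmetric tensor with $\nabla^a\mathcal{G}_{ab}=0$, $G_{ab}$ the Einstein tensor of $g_{ab}$, $E_{ab}=G_{ab}-\mathcal{G}_{ab}$, $E^{(\mathcal H)}=n^en^fE_{ef}$, $E^{(\mathcal M)}_b=n^e{h^f}_bE_{ef}$, and $E^{(\mathcal{EVOL})}_{ab}={h^e}_a{h^f}_bE_{ef}-\kappa h_{ab}E^{(\mathcal H)}$ for a constant $\kappa$. *)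

theory Defs
  imports "HOL-Analysis.Analysis"
begin

text \<open>Local coordinate rendering: the manifold M is represented by an open
coordinate domain U in real^'d (CARD('d) = n+1). Tensor fields are given by
their coordinate components; index positions are recorded in the names.\<close>

definition pd :: "'d::finite \<Rightarrow> (real^'d \<Rightarrow> real) \<Rightarrow> real^'d \<Rightarrow> real" where
  "pd i f x = deriv (\<lambda>t. f (x + t *\<^sub>R axis i 1)) 0"

fun iter_pd :: "'d::finite list \<Rightarrow> (real^'d \<Rightarrow> real) \<Rightarrow> real^'d \<Rightarrow> real" where
  "iter_pd [] f = f"
| "iter_pd (i # is) f = pd i (iter_pd is f)"

definition smooth_on :: "(real^'d::finite) set \<Rightarrow> (real^'d \<Rightarrow> real) \<Rightarrow> bool" where
  "smooth_on U f \<longleftrightarrow> (\<forall>is x. x \<in> U \<longrightarrow> iter_pd is f differentiable (at x))"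

definition qform :: "(real^'d \<Rightarrow> 'd::finite \<Rightarrow> 'd \<Rightarrow> real) \<Rightarrow> real^'d \<Rightarrow> real^'d \<Rightarrow> real^'d \<Rightarrow> real" where
  "qform g x v w = (\<Sum>a\<in>UNIV. \<Sum>b\<in>UNIV. g x a b * v $ a * w $ b)"

definition eucl_or_lorentz :: "(real^'d \<Rightarrow> 'd::finite \<Rightarrow> 'd \<Rightarrow> real) \<Rightarrow> real^'d \<Rightarrow> bool" where
  "eucl_or_lorentz g x \<longleftrightarrow>
     (\<forall>v. v \<noteq> 0 \<longrightarrow> qform g x v v > 0) \<or>
     (\<exists>v. qform g x v v < 0 \<and> (\<forall>w. w \<noteq> 0 \<and> qform g x v w = 0 \<longrightarrow> qform g x w w > 0))"

definition ginv :: "(real^'d \<Rightarrow> 'd::finite \<Rightarrow> 'd \<Rightarrow> real) \<Rightarrow> real^'d \<Rightarrow> 'd \<Rightarrow> 'd \<Rightarrow> real" where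
  "ginv g x a b = matrix_inv (\<chi> i j. g x i j) $ a $ b"

definition christoffel :: "(real^'d \<Rightarrow> 'd::finite \<Rightarrow> 'd \<Rightarrow> real) \<Rightarrow> real^'d \<Rightarrow> 'd \<Rightarrow> 'd \<Rightarrow> 'd \<Rightarrow> real" where
  "christoffel g x k i j = (1/2) * (\<Sum>l\<in>UNIV. ginv g x k l *
      (pd i (\<lambda>y. g y l j) x + pd j (\<lambda>y. g y l i) x - pd l (\<lambda>y. g y i j) x))"

definition riemann :: "(real^'d \<Rightarrow> 'd::finite \<Rightarrow> 'd \<Rightarrow> real) \<Rightarrow> real^'d \<Rightarrow> 'd \<Rightarrow> 'd \<Rightarrow> 'd \<Rightarrow> 'd \<Rightarrow> real" where
  "riemann g x r s m v =
     pd m (\<lambda>y. christoffel g y r v s) x - pd v (\<lambda>y. christoffel g y r m s) x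
     + (\<Sum>l\<in>UNIV. christoffel g x r m l * christoffel g x l v s)
     - (\<Sum>l\<in>UNIV. christoffel g x r v l * christoffel g x l m s)"

definition ricci :: "(real^'d \<Rightarrow> 'd::finite \<Rightarrow> 'd \<Rightarrow> real) \<Rightarrow> real^'d \<Rightarrow> 'd \<Rightarrow> 'd \<Rightarrow> real" where
  "ricci g x s v = (\<Sum>r\<in>UNIV. riemann g x r s r v)"

definition scalar_curv :: "(real^'d \<Rightarrow> 'd::finite \<Rightarrow> 'd \<Rightarrow> real) \<Rightarrow> real^'d \<Rightarrow> real" where
  "scalar_curv g x = (\<Sum>s\<in>UNIV. \<Sum>v\<in>UNIV. ginv g x s v * ricci g x s v)"

definition einstein :: "(real^'d \<Rightarrow> 'd::finite \<Rightarrow> 'd \<Rightarrow> real) \<Rightarrow> real^'d \<Rightarrow> 'd \<Rightarrow> 'd \<Rightarrow> real" where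
  "einstein g x a b = ricci g x a b - (1/2) * scalar_curv g x * g x a b"

definition cov1 :: "(real^'d \<Rightarrow> 'd::finite \<Rightarrow> 'd \<Rightarrow> real) \<Rightarrow> (real^'d \<Rightarrow> 'd \<Rightarrow> real) \<Rightarrow> real^'d \<Rightarrow> 'd \<Rightarrow> 'd \<Rightarrow> real" where
  "cov1 g w x c b = pd c (\<lambda>y. w y b) x - (\<Sum>d\<in>UNIV. christoffel g x d c b * w x d)"

definition cov2 :: "(real^'d \<Rightarrow> 'd::finite \<Rightarrow> 'd \<Rightarrow> real) \<Rightarrow> (real^'d \<Rightarrow> 'd \<Rightarrow> 'd \<Rightarrow> real) \<Rightarrow> real^'d \<Rightarrow> 'd \<Rightarrow> 'd \<Rightarrow> 'd \<Rightarrow> real" where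
  "cov2 g T x c a b = pd c (\<lambda>y. T y a b) x
     - (\<Sum>d\<in>UNIV. christoffel g x d c a * T x d b)
     - (\<Sum>d\<in>UNIV. christoffel g x d c b * T x a d)"

definition divg :: "(real^'d \<Rightarrow> 'd::finite \<Rightarrow> 'd \<Rightarrow> real) \<Rightarrow> (real^'d \<Rightarrow> 'd \<Rightarrow> 'd \<Rightarrow> real) \<Rightarrow> real^'d \<Rightarrow> 'd \<Rightarrow> real" where
  "divg g T x b = (\<Sum>a\<in>UNIV. \<Sum>c\<in>UNIV. ginv g x a c * cov2 g T x c a b)"

definition gradsq :: "(real^'d \<Rightarrow> 'd::finite \<Rightarrow> 'd \<Rightarrow> real) \<Rightarrow> (real^'d \<Rightarrow> real) \<Rightarrow> real^'d \<Rightarrow> real" where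
  "gradsq g \<sigma> x = (\<Sum>a\<in>UNIV. \<Sum>b\<in>UNIV. ginv g x a b * pd a \<sigma> x * pd b \<sigma> x)"

definition nlow :: "(real^'d \<Rightarrow> 'd::finite \<Rightarrow> 'd \<Rightarrow> real) \<Rightarrow> (real^'d \<Rightarrow> real) \<Rightarrow> real^'d \<Rightarrow> 'd \<Rightarrow> real" where
  "nlow g \<sigma> x a = pd a \<sigma> x / sqrt \<bar>gradsq g \<sigma> x\<bar>"

definition nup :: "(real^'d \<Rightarrow> 'd::finite \<Rightarrow> 'd \<Rightarrow> real) \<Rightarrow> (real^'d \<Rightarrow> real) \<Rightarrow> real^'d \<Rightarrow> 'd \<Rightarrow> real" where
  "nup g \<sigma> x a = (\<Sum>b\<in>UNIV. ginv g x a b * nlow g \<sigma> x b)"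

definition hmix :: "(real^'d \<Rightarrow> 'd::finite \<Rightarrow> 'd \<Rightarrow> real) \<Rightarrow> (real^'d \<Rightarrow> real) \<Rightarrow> real \<Rightarrow> real^'d \<Rightarrow> 'd \<Rightarrow> 'd \<Rightarrow> real" where
  "hmix g \<sigma> \<epsilon> x a b = (if a = b then 1 else 0) - \<epsilon> * nup g \<sigma> x a * nlow g \<sigma> x b"

definition hlow :: "(real^'d \<Rightarrow> 'd::finite \<Rightarrow> 'd \<Rightarrow> real) \<Rightarrow> (real^'d \<Rightarrow> real) \<Rightarrow> real \<Rightarrow> real^'d \<Rightarrow> 'd \<Rightarrow> 'd \<Rightarrow> real" where
  "hlow g \<sigma> \<epsilon> x a b = g x a b - \<epsilon> * nlow g \<sigma> x a * nlow g \<sigma> x b"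

definition hup :: "(real^'d \<Rightarrow> 'd::finite \<Rightarrow> 'd \<Rightarrow> real) \<Rightarrow> (real^'d \<Rightarrow> real) \<Rightarrow> real \<Rightarrow> real^'d \<Rightarrow> 'd \<Rightarrow> 'd \<Rightarrow> real" where
  "hup g \<sigma> \<epsilon> x a b = ginv g x a b - \<epsilon> * nup g \<sigma> x a * nup g \<sigma> x b"

definition extr :: "(real^'d \<Rightarrow> 'd::finite \<Rightarrow> 'd \<Rightarrow> real) \<Rightarrow> (real^'d \<Rightarrow> real) \<Rightarrow> real \<Rightarrow> real^'d \<Rightarrow> 'd \<Rightarrow> 'd \<Rightarrow> real" where
  "extr g \<sigma> \<epsilon> x a b = (\<Sum>e\<in>UNIV. hmix g \<sigma> \<epsilon> x e a * cov1 g (nlow g \<sigma>) x e b)"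

definition extr_up :: "(real^'d \<Rightarrow> 'd::finite \<Rightarrow> 'd \<Rightarrow> real) \<Rightarrow> (real^'d \<Rightarrow> real) \<Rightarrow> real \<Rightarrow> real^'d \<Rightarrow> 'd \<Rightarrow> 'd \<Rightarrow> real" where
  "extr_up g \<sigma> \<epsilon> x a b = (\<Sum>c\<in>UNIV. \<Sum>d\<in>UNIV. ginv g x a c * ginv g x b d * extr g \<sigma> \<epsilon> x c d)"

definition accel :: "(real^'d \<Rightarrow> 'd::finite \<Rightarrow> 'd \<Rightarrow> real) \<Rightarrow> (real^'d \<Rightarrow> real) \<Rightarrow> real^'d \<Rightarrow> 'd \<Rightarrow> real" where
  "accel g \<sigma> x a = (\<Sum>e\<in>UNIV. nup g \<sigma> x e * cov1 g (nlow g \<sigma>) x e a)"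

definition accel_up :: "(real^'d \<Rightarrow> 'd::finite \<Rightarrow> 'd \<Rightarrow> real) \<Rightarrow> (real^'d \<Rightarrow> real) \<Rightarrow> real^'d \<Rightarrow> 'd \<Rightarrow> real" where
  "accel_up g \<sigma> x a = (\<Sum>c\<in>UNIV. ginv g x a c * accel g \<sigma> x c)"

definition Eten :: "(real^'d \<Rightarrow> 'd::finite \<Rightarrow> 'd \<Rightarrow> real) \<Rightarrow> (real^'d \<Rightarrow> 'd \<Rightarrow> 'd \<Rightarrow> real) \<Rightarrow> real^'d \<Rightarrow> 'd \<Rightarrow> 'd \<Rightarrow> real" where
  "Eten g cG x a b = einstein g x a b - cG x a b"

definition E_H :: "(real^'d \<Rightarrow> 'd::finite \<Rightarrow> 'd \<Rightarrow> real) \<Rightarrow> (real^'d \<Rightarrow> 'd \<Rightarrow> 'd \<Rightarrow> real) \<Rightarrow> (real^'d \<Rightarrow> real) \<Rightarrow> real^'d \<Rightarrow> real" where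
  "E_H g cG \<sigma> x = (\<Sum>e\<in>UNIV. \<Sum>f\<in>UNIV. nup g \<sigma> x e * nup g \<sigma> x f * Eten g cG x e f)"

definition E_M :: "(real^'d \<Rightarrow> 'd::finite \<Rightarrow> 'd \<Rightarrow> real) \<Rightarrow> (real^'d \<Rightarrow> 'd \<Rightarrow> 'd \<Rightarrow> real) \<Rightarrow> (real^'d \<Rightarrow> real) \<Rightarrow> real \<Rightarrow> real^'d \<Rightarrow> 'd \<Rightarrow> real" where
  "E_M g cG \<sigma> \<epsilon> x b = (\<Sum>e\<in>UNIV. \<Sum>f\<in>UNIV. nup g \<sigma> x e * hmix g \<sigma> \<epsilon> x f b * Eten g cG x e f)"

definition E_EVOL :: "(real^'d \<Rightarrow> 'd::finite \<Rightarrow> 'd \<Rightarrow> real) \<Rightarrow> (real^'d \<Rightarrow> 'd \<Rightarrow> 'd \<Rightarrow> real) \<Rightarrow> (real^'d \<Rightarrow> real) \<Rightarrow> real \<Rightarrow> real \<Rightarrow> real^'d \<Rightarrow> 'd \<Rightarrow> 'd \<Rightarrow> real" where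
  "E_EVOL g cG \<sigma> \<epsilon> \<kappa> x a b =
     (\<Sum>e\<in>UNIV. \<Sum>f\<in>UNIV. hmix g \<sigma> \<epsilon> x e a * hmix g \<sigma> \<epsilon> x f b * Eten g cG x e f)
     - \<kappa> * hlow g \<sigma> \<epsilon> x a b * E_H g cG \<sigma> x"

text \<open>Induced (Levi-Civita of h) derivative of a spatial (0,2) tensor, in the
ambient form D_c T_{ab} = h^d_c h^e_a h^f_b nabla_d T_{ef}, and D^a T_{ab} = h^{ac} D_c T_{ab}.\<close>
definition Dspat :: "(real^'d \<Rightarrow> 'd::finite \<Rightarrow> 'd \<Rightarrow> real) \<Rightarrow> (real^'d \<Rightarrow> real) \<Rightarrow> real \<Rightarrow> (real^'d \<Rightarrow> 'd \<Rightarrow> 'd \<Rightarrow> real) \<Rightarrow> real^'d \<Rightarrow> 'd \<Rightarrow> 'd \<Rightarrow> 'd \<Rightarrow> real" where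
  "Dspat g \<sigma> \<epsilon> T x c a b = (\<Sum>d\<in>UNIV. \<Sum>e\<in>UNIV. \<Sum>f\<in>UNIV.
      hmix g \<sigma> \<epsilon> x d c * hmix g \<sigma> \<epsilon> x e a * hmix g \<sigma> \<epsilon> x f b * cov2 g T x d e f)"

definition Ddiv :: "(real^'d \<Rightarrow> 'd::finite \<Rightarrow> 'd \<Rightarrow> real) \<Rightarrow> (real^'d \<Rightarrow> real) \<Rightarrow> real \<Rightarrow> (real^'d \<Rightarrow> 'd \<Rightarrow> 'd \<Rightarrow> real) \<Rightarrow> real^'d \<Rightarrow> 'd \<Rightarrow> real" where
  "Ddiv g \<sigma> \<epsilon> T x b = (\<Sum>a\<in>UNIV. \<Sum>c\<in>UNIV. hup g \<sigma> \<epsilon> x a c * Dspat g \<sigma> \<epsilon> T x c a b)"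

end

theory Submission
  imports Defs
begin

text \<open>Where \<open>E_H\<close> and \<open>E_M\<close> vanish, \<open>E\<^sub>a\<^sub>b\<close> is tangential to the level surfaces,
  \<open>n\<^sup>a E\<^sub>a\<^sub>b = 0\<close>, so it coincides with \<open>E_EVOL\<close>. The contracted Bianchi identity
  and the vanishing divergence of \<open>cG\<close> make \<open>E\<close> divergence free, and differentiating
  \<open>n\<^sup>e E\<^sub>e\<^sub>b = 0\<close> on the open chart gives \<open>(\<nabla>\<^sub>c n\<^sup>e) E\<^sub>e\<^sub>b = - n\<^sup>e \<nabla>\<^sub>c E\<^sub>e\<^sub>b\<close>.
  Contracting this with the inverse metric gives \<open>K\<^sup>a\<^sup>b E\<^sub>a\<^sub>b = 0\<close>; projecting \<open>\<nabla>E\<close> onto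
  the level surfaces gives \<open>D\<^sup>a E\<^sub>a\<^sub>b = \<epsilon> (accel)\<^sup>a E\<^sub>a\<^sub>b\<close>. All of this is index computation
  in coordinates; the analytic input is the symmetry of second partial derivatives of
  smooth functions and the smoothness of the inverse metric, which follows from Cramer's rule.\<close>

section \<open>Partial derivatives and smoothness in a chart\<close>

lemmas has_frechet_derivative = frechet_derivative_works[THEN iffD1]

lemma has_real_derivative_along_line:
  assumes "(f has_derivative f') (at (p + t *\<^sub>R v))"
  shows "((\<lambda>s. f (p + s *\<^sub>R v)) has_real_derivative f' v) (at t)"
proof -
  have "((\<lambda>s::real. p + s *\<^sub>R v) has_derivative (\<lambda>s. s *\<^sub>R v)) (at t)"
    by (auto intro!: derivative_eq_intros)
  then have "((f \<circ> (\<lambda>s::real. p + s *\<^sub>R v)) has_derivative (f' \<circ> (\<lambda>s. s *\<^sub>R v))) (at t)"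
    by (rule diff_chain_at) (simp add: assms)
  moreover have "f' \<circ> (\<lambda>s. s *\<^sub>R v) = (\<lambda>s. f' v * s)"
    using has_derivative_bounded_linear[OF assms]
    by (auto simp: fun_eq_iff bounded_linear.linear linear_cmul)
  ultimately show ?thesis by (simp add: has_field_derivative_def o_def)
qed

lemma pd_has_derivative:
  assumes "(f has_derivative f') (at x)"
  shows "pd i f x = f' (axis i 1)"
  using has_real_derivative_along_line[of f f' x 0 "axis i 1"] assms
  unfolding pd_def by (simp add: DERIV_imp_deriv)

lemma pd_eq_frechet_derivative:
  "f differentiable (at x) \<Longrightarrow> pd i f x = frechet_derivative f (at x) (axis i 1)"
  by (rule pd_has_derivative) (rule has_frechet_derivative)

lemma has_real_derivative_along_axis:
  assumes "f differentiable (at (p + t *\<^sub>R axis i 1))"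
  shows "((\<lambda>s. f (p + s *\<^sub>R axis i 1)) has_real_derivative pd i f (p + t *\<^sub>R axis i 1)) (at t)"
  using has_real_derivative_along_line[OF has_frechet_derivative[OF assms]]
    pd_eq_frechet_derivative[OF assms] by simp

lemma pd_const [simp]: "pd i (\<lambda>y. c) x = 0"
  by (rule trans[OF pd_has_derivative[of _ "\<lambda>_. 0"]]) (auto intro: has_derivative_const)

lemma pd_add:
  assumes "f differentiable (at x)" "h differentiable (at x)"
  shows "pd i (\<lambda>y. f y + h y) x = pd i f x + pd i h x"
  using pd_has_derivative[OF has_derivative_add[OF assms[THEN has_frechet_derivative]]]
  by (simp add: pd_eq_frechet_derivative assms)

lemma pd_diff:
  assumes "f differentiable (at x)" "h differentiable (at x)"
  shows "pd i (\<lambda>y. f y - h y) x = pd i f x - pd i h x"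
  using pd_has_derivative[OF has_derivative_diff[OF assms[THEN has_frechet_derivative]]]
  by (simp add: pd_eq_frechet_derivative assms)

lemma pd_mult:
  assumes "f differentiable (at x)" "h differentiable (at x)"
  shows "pd i (\<lambda>y. f y * h y) x = pd i f x * h x + f x * pd i h x"
  using pd_has_derivative[OF has_derivative_mult[OF assms[THEN has_frechet_derivative]]]
  by (simp add: pd_eq_frechet_derivative assms)

lemma pd_divide_const:
  assumes "f differentiable (at x)"
  shows "pd i (\<lambda>y. f y / c) x = pd i f x / c"
  using pd_has_derivative[OF has_derivative_mult_right[OF has_frechet_derivative[OF assms]], of i "inverse c"]
  by (simp add: pd_eq_frechet_derivative assms divide_inverse mult.commute)

lemma pd_sum:
  assumes "finite A" "\<And>a. a \<in> A \<Longrightarrow> f a differentiable (at x)"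
  shows "pd i (\<lambda>y. \<Sum>a\<in>A. f a y) x = (\<Sum>a\<in>A. pd i (f a) x)"
  using assms
proof (induction A rule: finite_induct)
  case (insert a A)
  then have "(\<lambda>y. \<Sum>a\<in>A. f a y) differentiable (at x)"
    by (auto intro!: differentiable_sum)
  with insert show ?case
    using pd_add[of "f a" x "\<lambda>y. \<Sum>a\<in>A. f a y"] by simp
qed simp

lemma pd_cong_open:
  assumes "open U" "x \<in> U" "\<And>y. y \<in> U \<Longrightarrow> f y = h y"
  shows "pd i f x = pd i h x"
proof -
  obtain r where r: "r > 0" "ball x r \<subseteq> U" using assms openE by blast
  have "eventually (\<lambda>t::real. t \<in> ball 0 r) (nhds 0)"
    using r by (intro eventually_nhds_in_open) auto
  then have "eventually (\<lambda>t::real. f (x + t *\<^sub>R axis i 1) = h (x + t *\<^sub>R axis i 1)) (nhds 0)"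
    by (rule eventually_mono) (use r assms(3) in \<open>auto simp: dist_norm subset_iff\<close>)
  then show ?thesis unfolding pd_def by (rule deriv_cong_ev) simp
qed

lemma iter_pd_cong_open:
  assumes "open U" "\<And>y. y \<in> U \<Longrightarrow> f y = h y" "y \<in> U"
  shows "iter_pd ks f y = iter_pd ks h y"
  using assms(3)
  by (induction ks arbitrary: y) (auto simp: assms(2) intro: pd_cong_open[OF assms(1)])

lemma iter_pd_append_singleton: "iter_pd (ks @ [i]) f = iter_pd ks (pd i f)"
  by (induction ks) auto

text \<open>Smoothness is handled through its finite-order truncations, so that closure
  properties can be proved by induction on the order.\<close>

definition smooth_upto :: "(real^'d::finite) set \<Rightarrow> nat \<Rightarrow> (real^'d \<Rightarrow> real) \<Rightarrow> bool" where
  "smooth_upto U k f \<longleftrightarrow>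
     (\<forall>ks x. length ks \<le> k \<longrightarrow> x \<in> U \<longrightarrow> iter_pd ks f differentiable (at x))"

lemma smooth_on_iff_smooth_upto: "smooth_on U f \<longleftrightarrow> (\<forall>k. smooth_upto U k f)"
  unfolding smooth_on_def smooth_upto_def by (metis le_refl)

lemma smooth_upto_differentiable: "smooth_upto U k f \<Longrightarrow> x \<in> U \<Longrightarrow> f differentiable (at x)"
  unfolding smooth_upto_def by (metis iter_pd.simps(1) list.size(3) zero_le)

lemma smooth_upto_0: "smooth_upto U 0 f \<longleftrightarrow> (\<forall>x\<in>U. f differentiable (at x))"
  unfolding smooth_upto_def by auto

lemma smooth_upto_Suc:
  "smooth_upto U (Suc k) f \<longleftrightarrow> (\<forall>x\<in>U. f differentiable (at x)) \<and> (\<forall>i. smooth_upto U k (pd i f))"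
proof
  assume "smooth_upto U (Suc k) f"
  then show "(\<forall>x\<in>U. f differentiable (at x)) \<and> (\<forall>i. smooth_upto U k (pd i f))"
    using smooth_upto_differentiable unfolding smooth_upto_def
    by (metis iter_pd_append_singleton length_append_singleton not_less_eq_eq)
next
  assume *: "(\<forall>x\<in>U. f differentiable (at x)) \<and> (\<forall>i. smooth_upto U k (pd i f))"
  show "smooth_upto U (Suc k) f"
    unfolding smooth_upto_def
  proof (intro allI impI)
    fix ks :: "'a list" and x
    assume "length ks \<le> Suc k" "x \<in> U"
    with * show "iter_pd ks f differentiable (at x)"
      by (cases ks rule: rev_cases) (auto simp: smooth_upto_def iter_pd_append_singleton)
  qed
qed

lemma smooth_upto_Suc_imp: "smooth_upto U (Suc k) f \<Longrightarrow> smooth_upto U k f"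
  unfolding smooth_upto_def by auto

lemma smooth_upto_cong_open:
  assumes "open U" "\<And>y. y \<in> U \<Longrightarrow> f y = h y" "smooth_upto U k f"
  shows "smooth_upto U k h"
  unfolding smooth_upto_def
proof (intro allI impI)
  fix ks :: "'a list" and x
  assume "length ks \<le> k" and x: "x \<in> U"
  then have "iter_pd ks f differentiable (at x)"
    using assms(3) by (auto simp: smooth_upto_def)
  moreover have "\<And>y. y \<in> U \<Longrightarrow> iter_pd ks f y = iter_pd ks h y"
    by (rule iter_pd_cong_open[OF assms(1,2)])
  ultimately show "iter_pd ks h differentiable (at x)"
    using has_derivative_transform_within_open[OF _ assms(1) x]
    unfolding differentiable_def by blast
qed

lemma smooth_upto_const: "smooth_upto U k (\<lambda>y. c)"
proof (induction k arbitrary: c)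
  case (Suc k)
  have const_pd: "pd i (\<lambda>y. c) = (\<lambda>y. 0)" for i by (simp add: fun_eq_iff)
  show ?case unfolding smooth_upto_Suc const_pd using Suc by (simp add: smooth_upto_differentiable)
qed (simp add: smooth_upto_0)

lemma smooth_upto_add:
  assumes "open U"
  shows "smooth_upto U k f \<Longrightarrow> smooth_upto U k h \<Longrightarrow> smooth_upto U k (\<lambda>y. f y + h y)"
proof (induction k arbitrary: f h)
  case (Suc k)
  have "smooth_upto U k (pd i (\<lambda>y. f y + h y))" for i
  proof (rule smooth_upto_cong_open[OF assms])
    show "smooth_upto U k (\<lambda>y. pd i f y + pd i h y)"
      using Suc by (simp add: smooth_upto_Suc)
    show "pd i f y + pd i h y = pd i (\<lambda>y. f y + h y) y" if "y \<in> U" for y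
      using Suc.prems that by (simp add: pd_add smooth_upto_differentiable)
  qed
  with Suc.prems show ?case
    by (simp add: smooth_upto_Suc differentiable_add)
qed (simp add: smooth_upto_0 differentiable_add)

lemma smooth_upto_mult:
  assumes "open U"
  shows "smooth_upto U k f \<Longrightarrow> smooth_upto U k h \<Longrightarrow> smooth_upto U k (\<lambda>y. f y * h y)"
proof (induction k arbitrary: f h)
  case (Suc k)
  have "smooth_upto U k (pd i (\<lambda>y. f y * h y))" for i
  proof (rule smooth_upto_cong_open[OF assms])
    have "smooth_upto U k (pd i f)" "smooth_upto U k (pd i h)" "smooth_upto U k f" "smooth_upto U k h"
      using Suc.prems smooth_upto_Suc_imp by (auto simp: smooth_upto_Suc)
    then show "smooth_upto U k (\<lambda>y. pd i f y * h y + f y * pd i h y)"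
      by (intro smooth_upto_add[OF assms] Suc.IH)
    show "pd i f y * h y + f y * pd i h y = pd i (\<lambda>y. f y * h y) y" if "y \<in> U" for y
      using Suc.prems that by (simp add: pd_mult smooth_upto_differentiable)
  qed
  with Suc.prems show ?case
    by (simp add: smooth_upto_Suc differentiable_mult)
qed (simp add: smooth_upto_0 differentiable_mult)

lemma smooth_upto_inverse:
  assumes "open U"
  shows "smooth_upto U k h \<Longrightarrow> (\<And>y. y \<in> U \<Longrightarrow> h y \<noteq> 0) \<Longrightarrow> smooth_upto U k (\<lambda>y. inverse (h y))"
proof (induction k arbitrary: h)
  case 0
  then show ?case
    by (auto simp: smooth_upto_0 dest: smooth_upto_differentiable intro!: differentiable_inverse)
next
  case (Suc k)
  have "smooth_upto U k (pd i (\<lambda>y. inverse (h y)))" for i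
  proof (rule smooth_upto_cong_open[OF assms])
    have h: "smooth_upto U k (pd i h)" "smooth_upto U k h"
      using Suc.prems smooth_upto_Suc_imp by (auto simp: smooth_upto_Suc)
    then have "smooth_upto U k (\<lambda>y. inverse (h y * h y))"
      using Suc.prems by (intro Suc.IH smooth_upto_mult[OF assms]) auto
    then show "smooth_upto U k (\<lambda>y. ((-1) * pd i h y) * inverse (h y * h y))"
      by (intro smooth_upto_mult[OF assms] smooth_upto_const h)
    show "((-1) * pd i h y) * inverse (h y * h y) = pd i (\<lambda>y. inverse (h y)) y" if y: "y \<in> U" for y
    proof -
      have d: "h differentiable (at y)" using Suc.prems(1) y smooth_upto_differentiable by blast
      have "((\<lambda>y. inverse (h y)) has_derivative
              (\<lambda>v. - (inverse (h y) * frechet_derivative h (at y) v * inverse (h y)))) (at y)"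
        using Suc.prems(2)[OF y] has_frechet_derivative[OF d] by (auto intro!: derivative_eq_intros)
      from pd_has_derivative[OF this, of i] show ?thesis
        using Suc.prems(2)[OF y] pd_eq_frechet_derivative[OF d, of i] by (simp add: field_simps)
    qed
  qed
  with Suc.prems show ?case
    by (auto simp: smooth_upto_Suc dest: smooth_upto_differentiable intro!: differentiable_inverse)
qed

lemma smooth_upto_sqrt:
  assumes "open U"
  shows "smooth_on U h \<Longrightarrow> (\<And>y. y \<in> U \<Longrightarrow> h y > 0) \<Longrightarrow> smooth_upto U k (\<lambda>y. sqrt (h y))"
proof (induction k)
  have sqrt_deriv: "((\<lambda>y. sqrt (h y)) has_derivative
      (\<lambda>v. frechet_derivative h (at y) v * (inverse (sqrt (h y)) / 2))) (at y)"
    if "smooth_on U h" "\<And>y. y \<in> U \<Longrightarrow> h y > 0" "y \<in> U" for y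
    using that smooth_upto_differentiable smooth_on_iff_smooth_upto
    by (blast intro: has_derivative_real_sqrt has_frechet_derivative)
  {
    case 0
    then show ?case using sqrt_deriv unfolding smooth_upto_0 differentiable_def by blast
  next
    case (Suc k)
    have "smooth_upto U k (pd i (\<lambda>y. sqrt (h y)))" for i
    proof (rule smooth_upto_cong_open[OF assms])
      have "smooth_upto U k (pd i h)"
        using Suc.prems by (meson smooth_on_iff_smooth_upto smooth_upto_Suc)
      moreover have "smooth_upto U k (\<lambda>y. inverse (sqrt (h y)))"
        using Suc.prems(2) by (intro smooth_upto_inverse[OF assms] Suc.IH Suc.prems) force+
      ultimately show "smooth_upto U k (\<lambda>y. pd i h y * (inverse (sqrt (h y)) * (1/2)))"
        by (intro smooth_upto_mult[OF assms] smooth_upto_const)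
      show "pd i h y * (inverse (sqrt (h y)) * (1/2)) = pd i (\<lambda>y. sqrt (h y)) y" if "y \<in> U" for y
        using pd_has_derivative[OF sqrt_deriv[OF Suc.prems that], of i]
          pd_eq_frechet_derivative[OF smooth_upto_differentiable, of U _ h y i] Suc.prems(1) that
        by (simp add: smooth_on_iff_smooth_upto)
    qed
    with Suc show ?case
      using sqrt_deriv unfolding smooth_upto_Suc differentiable_def by blast
  }
qed

lemma smooth_on_differentiable: "smooth_on U f \<Longrightarrow> x \<in> U \<Longrightarrow> f differentiable (at x)"
  by (meson smooth_on_iff_smooth_upto smooth_upto_differentiable)

lemma smooth_on_pd: "smooth_on U f \<Longrightarrow> smooth_on U (pd i f)"
  by (meson smooth_on_iff_smooth_upto smooth_upto_Suc)

lemma smooth_on_cong_open: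
  "open U \<Longrightarrow> (\<And>y. y \<in> U \<Longrightarrow> f y = h y) \<Longrightarrow> smooth_on U f \<Longrightarrow> smooth_on U h"
  by (meson smooth_on_iff_smooth_upto smooth_upto_cong_open)

lemma smooth_on_const: "smooth_on U (\<lambda>y. c)"
  by (simp add: smooth_on_iff_smooth_upto smooth_upto_const)

lemma smooth_on_add: "open U \<Longrightarrow> smooth_on U f \<Longrightarrow> smooth_on U h \<Longrightarrow> smooth_on U (\<lambda>y. f y + h y)"
  by (simp add: smooth_on_iff_smooth_upto smooth_upto_add)

lemma smooth_on_mult: "open U \<Longrightarrow> smooth_on U f \<Longrightarrow> smooth_on U h \<Longrightarrow> smooth_on U (\<lambda>y. f y * h y)"
  by (simp add: smooth_on_iff_smooth_upto smooth_upto_mult)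

lemma smooth_on_diff:
  assumes "open U" "smooth_on U f" "smooth_on U h"
  shows "smooth_on U (\<lambda>y. f y - h y)"
proof -
  have "smooth_on U (\<lambda>y. (-1) * h y)"
    using assms by (intro smooth_on_mult smooth_on_const)
  from smooth_on_add[OF assms(1,2) this] show ?thesis by simp
qed

lemma smooth_on_divide_const: "open U \<Longrightarrow> smooth_on U f \<Longrightarrow> smooth_on U (\<lambda>y. f y / c)"
  using smooth_on_mult[OF _ _ smooth_on_const, of U f "inverse c"] by (simp add: divide_inverse)

lemma smooth_on_sum:
  assumes "open U" "finite A" "\<And>a. a \<in> A \<Longrightarrow> smooth_on U (f a)"
  shows "smooth_on U (\<lambda>y. \<Sum>a\<in>A. f a y)"
  using assms(2,3)
  by (induction A rule: finite_induct) (auto simp: smooth_on_const intro!: smooth_on_add assms(1))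

lemma smooth_on_prod:
  assumes "open U" "finite A" "\<And>a. a \<in> A \<Longrightarrow> smooth_on U (f a)"
  shows "smooth_on U (\<lambda>y. \<Prod>a\<in>A. f a y)"
  using assms(2,3)
  by (induction A rule: finite_induct) (auto simp: smooth_on_const intro!: smooth_on_mult assms(1))

lemma smooth_on_divide:
  "open U \<Longrightarrow> smooth_on U f \<Longrightarrow> smooth_on U h \<Longrightarrow> (\<And>y. y \<in> U \<Longrightarrow> h y \<noteq> 0) \<Longrightarrow> smooth_on U (\<lambda>y. f y / h y)"
  using smooth_on_mult[of U f "\<lambda>y. inverse (h y)"] smooth_upto_inverse[of U _ h]
  by (simp add: smooth_on_iff_smooth_upto divide_inverse)

lemma smooth_on_sqrt:
  "open U \<Longrightarrow> smooth_on U h \<Longrightarrow> (\<And>y. y \<in> U \<Longrightarrow> h y > 0) \<Longrightarrow> smooth_on U (\<lambda>y. sqrt (h y))"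
  by (simp add: smooth_on_iff_smooth_upto smooth_upto_sqrt)

lemma smooth_on_det:
  "open U \<Longrightarrow> (\<And>i j. smooth_on U (F i j)) \<Longrightarrow> smooth_on U (\<lambda>y. det (\<chi> i j. F i j y))"
  unfolding det_def
  by (auto intro!: smooth_on_sum smooth_on_mult smooth_on_prod smooth_on_const simp: finite_permutations)

section \<open>Symmetry of second partial derivatives\<close>

definition second_difference :: "(real^'d::finite \<Rightarrow> real) \<Rightarrow> real^'d \<Rightarrow> 'd \<Rightarrow> 'd \<Rightarrow> real \<Rightarrow> real" where
  "second_difference f x i j h =
     (f (x + h *\<^sub>R axis i 1 + h *\<^sub>R axis j 1) - f (x + h *\<^sub>R axis i 1) - f (x + h *\<^sub>R axis j 1) + f x) / h\<^sup>2"

lemma second_difference_commute: "second_difference f x i j = second_difference f x j i"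
  unfolding second_difference_def by (simp add: fun_eq_iff algebra_simps)

lemma second_difference_mean_value:
  assumes f: "smooth_on U f" and h: "0 < h" and U: "cball x (2 * h) \<subseteq> U"
  shows "\<exists>\<xi>. 0 < \<xi> \<and> \<xi> < h \<and> second_difference f x i j h
    = (pd i f (x + h *\<^sub>R axis j 1 + \<xi> *\<^sub>R axis i 1) - pd i f (x + \<xi> *\<^sub>R axis i 1)) / h"
proof -
  define u where "u = (axis i 1 :: real^'a)"
  define w where "w = (axis j 1 :: real^'a)"
  define \<phi> where "\<phi> t = f (x + h *\<^sub>R w + t *\<^sub>R u) - f (x + t *\<^sub>R u)" for t
  have inU: "x + a *\<^sub>R w + t *\<^sub>R u \<in> U" if "0 \<le> t" "t \<le> h" "0 \<le> a" "a \<le> h" for t a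
  proof -
    have "norm w = 1" "norm u = 1" by (auto simp: u_def w_def)
    then have "norm (a *\<^sub>R w + t *\<^sub>R u) \<le> a + t"
      using norm_triangle_ineq[of "a *\<^sub>R w" "t *\<^sub>R u"] that by simp
    moreover have "dist x (x + a *\<^sub>R w + t *\<^sub>R u) = norm (a *\<^sub>R w + t *\<^sub>R u)"
      by (metis add.assoc add_diff_cancel_left' dist_commute dist_norm)
    ultimately have "dist x (x + a *\<^sub>R w + t *\<^sub>R u) \<le> 2 * h"
      using that by simp
    then show ?thesis using U by auto
  qed
  have der: "DERIV \<phi> t :> pd i f (x + h *\<^sub>R w + t *\<^sub>R u) - pd i f (x + t *\<^sub>R u)"
    if "0 \<le> t" "t \<le> h" for t
  proof -
    have a1: "f differentiable (at (x + h *\<^sub>R w + t *\<^sub>R u))"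
      using smooth_on_differentiable[OF f inU[OF that, of h]] h by simp
    have a2: "f differentiable (at (x + t *\<^sub>R u))"
      using smooth_on_differentiable[OF f inU[OF that, of 0]] h by simp
    show ?thesis
      unfolding \<phi>_def u_def
      using has_real_derivative_along_axis[OF a1[unfolded u_def]]
        has_real_derivative_along_axis[OF a2[unfolded u_def]]
      by (intro derivative_intros) auto
  qed
  obtain \<xi> where \<xi>: "0 < \<xi>" "\<xi> < h"
    and mvt: "\<phi> h - \<phi> 0 = (h - 0) * (pd i f (x + h *\<^sub>R w + \<xi> *\<^sub>R u) - pd i f (x + \<xi> *\<^sub>R u))"
    using MVT2[OF h der] by auto
  have "f (x + h *\<^sub>R axis i 1 + h *\<^sub>R axis j 1) - f (x + h *\<^sub>R axis i 1) - f (x + h *\<^sub>R axis j 1) + f x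
      = h * (pd i f (x + h *\<^sub>R w + \<xi> *\<^sub>R u) - pd i f (x + \<xi> *\<^sub>R u))"
    using mvt unfolding \<phi>_def u_def w_def by (simp add: algebra_simps)
  then have "second_difference f x i j h = (pd i f (x + h *\<^sub>R w + \<xi> *\<^sub>R u) - pd i f (x + \<xi> *\<^sub>R u)) / h"
    using h unfolding second_difference_def by (simp add: power2_eq_square)
  with \<xi> show ?thesis
    unfolding u_def w_def by blast
qed

text \<open>Only first-order differentiability of \<open>pd i f\<close> at \<open>x\<close> enters, through the
  mean value form above; no continuity of second derivatives is needed.\<close>

lemma second_difference_approx:
  assumes U: "open U" and f: "smooth_on U f" and x: "x \<in> U" and e: "e > 0"
  shows "\<exists>\<delta>>0. \<forall>h. 0 < h \<longrightarrow> h < \<delta> \<longrightarrow> \<bar>second_difference f x i j h - pd j (pd i f) x\<bar> \<le> 3 * e"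
proof -
  obtain r where r: "r > 0" "ball x r \<subseteq> U" using U x openE by blast
  define F where "F = pd i f"
  define F' where "F' = frechet_derivative F (at x)"
  have F_diff: "F differentiable (at x)"
    unfolding F_def by (rule smooth_on_differentiable[OF smooth_on_pd[OF f] x])
  then have F'_w: "F' (axis j 1) = pd j (pd i f) x"
    unfolding F'_def F_def by (simp add: pd_eq_frechet_derivative)
  have lin: "linear F'"
    using F_diff has_derivative_linear has_frechet_derivative unfolding F'_def by blast
  obtain d where d: "d > 0" "\<And>y. norm (y - x) < d \<Longrightarrow> \<bar>F y - F x - F' (y - x)\<bar> \<le> e * norm (y - x)"
    using has_frechet_derivative[OF F_diff] e unfolding has_derivative_at_alt F'_def by (metis real_norm_def)
  show ?thesis
  proof (intro exI[of _ "min (d/2) (r/2)"] conjI allI impI)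
    show "min (d/2) (r/2) > 0" using d r by simp
    fix h :: real assume h0: "0 < h" and hd: "h < min (d/2) (r/2)"
    have "cball x (2 * h) \<subseteq> U" using r hd by (auto simp: subset_iff)
    then obtain \<xi> where \<xi>: "0 < \<xi>" "\<xi> < h"
      and sd: "second_difference f x i j h
        = (F (x + h *\<^sub>R axis j 1 + \<xi> *\<^sub>R axis i 1) - F (x + \<xi> *\<^sub>R axis i 1)) / h"
      using second_difference_mean_value[OF f h0] unfolding F_def by blast
    define y1 where "y1 = x + h *\<^sub>R axis j 1 + \<xi> *\<^sub>R axis i 1"
    define y2 where "y2 = x + \<xi> *\<^sub>R axis i 1"
    have "norm (y1 - x) \<le> norm (h *\<^sub>R axis j (1::real)) + norm (\<xi> *\<^sub>R axis i (1::real))"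
      unfolding y1_def by (metis add.assoc add_diff_cancel_left' norm_triangle_ineq)
    then have n1: "norm (y1 - x) \<le> h + \<xi>"
      using \<xi> h0 by simp
    have n2: "norm (y2 - x) = \<xi>" using \<xi> by (simp add: y2_def)
    have b1: "\<bar>F y1 - F x - F' (y1 - x)\<bar> \<le> e * norm (y1 - x)" using d(2)[of y1] n1 \<xi> hd by simp
    have b2: "\<bar>F y2 - F x - F' (y2 - x)\<bar> \<le> e * norm (y2 - x)" using d(2)[of y2] n2 \<xi> hd by simp
    have "F' (y1 - x) - F' (y2 - x) = h * F' (axis j 1)"
      using lin by (simp add: y1_def y2_def linear_add linear_cmul)
    then have "\<bar>F y1 - F y2 - h * F' (axis j 1)\<bar> \<le> e * norm (y1 - x) + e * norm (y2 - x)"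
      using b1 b2 by linarith
    also have "\<dots> \<le> e * (h + \<xi>) + e * \<xi>" using n1 n2 e by (intro add_mono mult_left_mono) auto
    also have "\<dots> \<le> 3 * e * h" using \<xi> e by (simp add: algebra_simps)
    finally have m: "\<bar>F y1 - F y2 - h * F' (axis j 1)\<bar> \<le> 3 * e * h" .
    have "second_difference f x i j h - pd j (pd i f) x = (F y1 - F y2 - h * F' (axis j 1)) / h"
      using h0 F'_w unfolding sd y1_def y2_def by (simp add: diff_divide_distrib)
    then have "\<bar>second_difference f x i j h - pd j (pd i f) x\<bar> = \<bar>F y1 - F y2 - h * F' (axis j 1)\<bar> / h"
      using h0 by simp
    also have "\<dots> \<le> 3 * e" using m h0 by (simp add: divide_le_eq mult.commute)
    finally show "\<bar>second_difference f x i j h - pd j (pd i f) x\<bar> \<le> 3 * e" .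
  qed
qed

lemma second_difference_tendsto:
  assumes "open U" "smooth_on U f" "x \<in> U"
  shows "(second_difference f x i j \<longlongrightarrow> pd j (pd i f) x) (at_right 0)"
proof (rule tendstoI)
  fix e :: real assume "e > 0"
  then obtain \<delta> where "\<delta> > 0"
    and \<delta>: "\<And>h. 0 < h \<Longrightarrow> h < \<delta> \<Longrightarrow> \<bar>second_difference f x i j h - pd j (pd i f) x\<bar> \<le> 3 * (e / 6)"
    using second_difference_approx[OF assms, where e = "e / 6" and i = i and j = j] by auto
  then show "\<forall>\<^sub>F h in at_right 0. dist (second_difference f x i j h) (pd j (pd i f) x) < e"
    unfolding eventually_at_right_field dist_real_def
  proof (intro exI[of _ \<delta>] conjI allI impI)
    fix h :: real
    assume "0 < h" "h < \<delta>"
    with \<delta>[of h] \<open>e > 0\<close> show "\<bar>second_difference f x i j h - pd j (pd i f) x\<bar> < e"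
      by linarith
  qed simp
qed

lemma pd_commute:
  assumes "open U" "smooth_on U f" "x \<in> U"
  shows "pd i (pd j f) x = pd j (pd i f) x"
proof (rule tendsto_unique[OF trivial_limit_at_right_real])
  show "(second_difference f x i j \<longlongrightarrow> pd i (pd j f) x) (at_right 0)"
    using second_difference_tendsto[OF assms, of j i] by (simp only: second_difference_commute)
  show "(second_difference f x i j \<longlongrightarrow> pd j (pd i f) x) (at_right 0)"
    by (rule second_difference_tendsto[OF assms])
qed

section \<open>Index identities at a point\<close>

lemma mult_if_zero_right: "a * (if P then b else 0) = (if P then a * b else (0::'a::mult_zero))"
  and mult_if_zero_left: "(if P then b else 0) * a = (if P then b * a else (0::'a::mult_zero))"
  by simp_all

lemma sum_delta_right [simp]: "(\<Sum>j\<in>UNIV. f j * (if j = b then 1 else 0)) = (f (b::'i::finite) :: 'a::comm_semiring_1)"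
  and sum_delta_left [simp]: "(\<Sum>j\<in>UNIV. (if j = b then 1 else 0) * f j) = f b"
  and sum_delta_right' [simp]: "(\<Sum>j\<in>UNIV. f j * (if b = j then 1 else 0)) = f b"
  and sum_delta_left' [simp]: "(\<Sum>j\<in>UNIV. (if b = j then 1 else 0) * f j) = f b"
  by (simp_all add: mult_if_zero_right mult_if_zero_left)

lemma sum3_acb: "(\<Sum>a\<in>A. \<Sum>b\<in>B. \<Sum>c\<in>C. F a b c) = (\<Sum>a\<in>A. \<Sum>c\<in>C. \<Sum>b\<in>B. F a b c)"
  by (rule sum.cong[OF refl]) (rule sum.swap)

lemma sum3_bac: "(\<Sum>a\<in>A. \<Sum>b\<in>B. \<Sum>c\<in>C. F a b c) = (\<Sum>b\<in>B. \<Sum>a\<in>A. \<Sum>c\<in>C. F a b c)"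
  by (rule sum.swap)

lemma sum3_bca: "(\<Sum>a\<in>A. \<Sum>b\<in>B. \<Sum>c\<in>C. F a b c) = (\<Sum>b\<in>B. \<Sum>c\<in>C. \<Sum>a\<in>A. F a b c)"
  by (subst sum3_bac) (rule sum.cong[OF refl], rule sum.swap)

lemma sum3_cab: "(\<Sum>a\<in>A. \<Sum>b\<in>B. \<Sum>c\<in>C. F a b c) = (\<Sum>c\<in>C. \<Sum>a\<in>A. \<Sum>b\<in>B. F a b c)"
  by (subst sum3_acb) (rule sum.swap)

lemma sum3_cba: "(\<Sum>a\<in>A. \<Sum>b\<in>B. \<Sum>c\<in>C. F a b c) = (\<Sum>c\<in>C. \<Sum>b\<in>B. \<Sum>a\<in>A. F a b c)"
  by (subst sum3_bca) (rule sum.swap)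

lemma lower_raised_components:
  fixes g gi :: "'i::finite \<Rightarrow> 'i \<Rightarrow> real"
  assumes g_sym: "\<And>a b. g a b = g b a" and g_gi: "\<And>a c. (\<Sum>b\<in>UNIV. g a b * gi b c) = (if a = c then 1 else 0)"
  shows "(\<Sum>d\<in>UNIV. (\<Sum>l\<in>UNIV. gi d l * F l) * g d b) = F b"
proof -
  have "(\<Sum>d\<in>UNIV. (\<Sum>l\<in>UNIV. gi d l * F l) * g d b) = (\<Sum>d\<in>UNIV. \<Sum>l\<in>UNIV. g b d * gi d l * F l)"
    by (simp add: sum_distrib_right sum_distrib_left g_sym mult_ac)
  also have "\<dots> = (\<Sum>l\<in>UNIV. (\<Sum>d\<in>UNIV. g b d * gi d l) * F l)"
    by (subst sum.swap) (simp add: sum_distrib_right)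
  also have "\<dots> = F b" by (simp add: g_gi)
  finally show ?thesis .
qed

lemma raise_lowered_components:
  fixes g gi :: "'i::finite \<Rightarrow> 'i \<Rightarrow> real"
  assumes gi_g: "\<And>a c. (\<Sum>b\<in>UNIV. gi a b * g b c) = (if a = c then 1 else 0)"
  shows "(\<Sum>p\<in>UNIV. gi l p * (\<Sum>d\<in>UNIV. g p d * F d)) = F l"
proof -
  have "(\<Sum>p\<in>UNIV. gi l p * (\<Sum>d\<in>UNIV. g p d * F d)) = (\<Sum>d\<in>UNIV. (\<Sum>p\<in>UNIV. gi l p * g p d) * F d)"
    by (simp add: sum_distrib_left sum_distrib_right mult_ac) (rule sum.swap)
  also have "\<dots> = F l" by (simp add: gi_g)
  finally show ?thesis .
qed

lemma metric_compatibility_components: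
  fixes g gi :: "'i::finite \<Rightarrow> 'i \<Rightarrow> real" and dg G :: "'i \<Rightarrow> 'i \<Rightarrow> 'i \<Rightarrow> real"
  assumes g_sym: "\<And>a b. g a b = g b a" and g_gi: "\<And>a c. (\<Sum>b\<in>UNIV. g a b * gi b c) = (if a = c then 1 else 0)"
    and dg_sym: "\<And>c a b. dg c a b = dg c b a"
    and G_def: "\<And>k i j. G k i j = 1/2 * (\<Sum>l\<in>UNIV. gi k l * (dg i l j + dg j l i - dg l i j))"
  shows "dg c a b = (\<Sum>d\<in>UNIV. G d c a * g d b) + (\<Sum>d\<in>UNIV. G d c b * g a d)"
proof -
  have lowered: "(\<Sum>d\<in>UNIV. G d i j * g d b) = 1/2 * (dg i b j + dg j b i - dg b i j)" for i j b
  proof -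
    have "(\<Sum>d\<in>UNIV. G d i j * g d b) = 1/2 * (\<Sum>d\<in>UNIV. (\<Sum>l\<in>UNIV. gi d l * (dg i l j + dg j l i - dg l i j)) * g d b)"
      by (simp add: G_def sum_distrib_left mult_ac)
    also have "\<dots> = 1/2 * (dg i b j + dg j b i - dg b i j)"
      by (simp only: lower_raised_components[OF g_sym g_gi])
    finally show ?thesis .
  qed
  have "(\<Sum>d\<in>UNIV. G d c b * g a d) = (\<Sum>d\<in>UNIV. G d c b * g d a)" by (simp add: g_sym)
  then show ?thesis using lowered[of c a b] lowered[of c b a] dg_sym[of c b a] dg_sym[of a b c] dg_sym[of b a c] by simp
qed

lemma inverse_metric_derivative_components:
  fixes g gi :: "'i::finite \<Rightarrow> 'i \<Rightarrow> real" and dg dgi G :: "'i \<Rightarrow> 'i \<Rightarrow> 'i \<Rightarrow> real"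
  assumes g_sym: "\<And>a b. g a b = g b a" and gi_sym: "\<And>a b. gi a b = gi b a"
    and g_gi: "\<And>a c. (\<Sum>b\<in>UNIV. g a b * gi b c) = (if a = c then 1 else 0)"
    and gi_g: "\<And>a c. (\<Sum>b\<in>UNIV. gi a b * g b c) = (if a = c then 1 else 0)"
    and dg_eq: "\<And>c a b. dg c a b = (\<Sum>d\<in>UNIV. G d c a * g d b) + (\<Sum>d\<in>UNIV. G d c b * g a d)"
    and d_g_gi: "\<And>c p b. (\<Sum>q\<in>UNIV. dg c p q * gi q b + g p q * dgi c q b) = 0"
  shows "dgi c a b = - (\<Sum>d\<in>UNIV. G a c d * gi d b) - (\<Sum>d\<in>UNIV. G b c d * gi a d)"
proof -
  have "dgi c a b = (\<Sum>p\<in>UNIV. (\<Sum>q\<in>UNIV. gi a q * g q p) * dgi c p b)" by (simp add: gi_g)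
  also have "\<dots> = (\<Sum>q\<in>UNIV. gi a q * (\<Sum>p\<in>UNIV. g q p * dgi c p b))"
    by (simp add: sum_distrib_left sum_distrib_right mult_ac) (rule sum.swap)
  also have "\<dots> = (\<Sum>q\<in>UNIV. gi a q * (- (\<Sum>p\<in>UNIV. dg c q p * gi p b)))"
  proof -
    have "(\<Sum>p\<in>UNIV. g q p * dgi c p b) = - (\<Sum>p\<in>UNIV. dg c q p * gi p b)" for q
      using d_g_gi[of c q b] by (simp add: sum.distrib eq_neg_iff_add_eq_0 add.commute)
    then show ?thesis by simp
  qed
  also have "\<dots> = - (\<Sum>q\<in>UNIV. \<Sum>p\<in>UNIV. gi a q * dg c q p * gi p b)"
    by (simp add: sum_distrib_left sum_negf mult_ac)
  also have "(\<Sum>q\<in>UNIV. \<Sum>p\<in>UNIV. gi a q * dg c q p * gi p b)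
     = (\<Sum>q\<in>UNIV. \<Sum>p\<in>UNIV. \<Sum>d\<in>UNIV. gi a q * G d c q * g d p * gi p b)
       + (\<Sum>q\<in>UNIV. \<Sum>p\<in>UNIV. \<Sum>d\<in>UNIV. gi a q * G d c p * g q d * gi p b)"
    by (simp add: dg_eq algebra_simps sum.distrib sum_distrib_left sum_distrib_right)
  also have "(\<Sum>q\<in>UNIV. \<Sum>p\<in>UNIV. \<Sum>d\<in>UNIV. gi a q * G d c q * g d p * gi p b) = (\<Sum>d\<in>UNIV. G b c d * gi a d)"
  proof -
    have "(\<Sum>q\<in>UNIV. \<Sum>p\<in>UNIV. \<Sum>d\<in>UNIV. gi a q * G d c q * g d p * gi p b)
        = (\<Sum>q\<in>UNIV. \<Sum>d\<in>UNIV. gi a q * G d c q * (\<Sum>p\<in>UNIV. g d p * gi p b))"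
      by (subst sum3_acb) (simp add: sum_distrib_left mult_ac)
    also have "\<dots> = (\<Sum>q\<in>UNIV. gi a q * G b c q)" by (simp add: g_gi)
    finally show ?thesis by (simp add: mult_ac)
  qed
  also have "(\<Sum>q\<in>UNIV. \<Sum>p\<in>UNIV. \<Sum>d\<in>UNIV. gi a q * G d c p * g q d * gi p b) = (\<Sum>d\<in>UNIV. G a c d * gi d b)"
  proof -
    have "(\<Sum>q\<in>UNIV. \<Sum>p\<in>UNIV. \<Sum>d\<in>UNIV. gi a q * G d c p * g q d * gi p b)
        = (\<Sum>p\<in>UNIV. \<Sum>d\<in>UNIV. (\<Sum>q\<in>UNIV. gi a q * g q d) * G d c p * gi p b)"
      by (subst sum3_bca) (simp add: sum_distrib_right sum_distrib_left mult_ac)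
    also have "\<dots> = (\<Sum>p\<in>UNIV. G a c p * gi p b)" by (simp add: gi_g mult.assoc)
    finally show ?thesis .
  qed
  finally show ?thesis by simp
qed

lemma trace_derivative_components:
  fixes G :: "'i::finite \<Rightarrow> 'i \<Rightarrow> 'i \<Rightarrow> real" and gi T :: "'i \<Rightarrow> 'i \<Rightarrow> real"
    and dgi dT :: "'i \<Rightarrow> 'i \<Rightarrow> 'i \<Rightarrow> real"
  assumes dgi_eq: "\<And>c a b. dgi c a b = - (\<Sum>d\<in>UNIV. G a c d * gi d b) - (\<Sum>d\<in>UNIV. G b c d * gi a d)"
  shows "(\<Sum>a\<in>UNIV. \<Sum>b\<in>UNIV. dgi c a b * T a b + gi a b * dT c a b)
       = (\<Sum>a\<in>UNIV. \<Sum>b\<in>UNIV. gi a b * (dT c a b - (\<Sum>l\<in>UNIV. G l c a * T l b) - (\<Sum>l\<in>UNIV. G l c b * T a l)))"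
proof -
  have L1: "(\<Sum>a\<in>UNIV. \<Sum>b\<in>UNIV. dgi c a b * T a b) =
     - (\<Sum>a\<in>UNIV. \<Sum>b\<in>UNIV. \<Sum>d\<in>UNIV. G a c d * gi d b * T a b) - (\<Sum>a\<in>UNIV. \<Sum>b\<in>UNIV. \<Sum>d\<in>UNIV. G b c d * gi a d * T a b)"
    by (simp add: dgi_eq algebra_simps sum_distrib_right sum_distrib_left sum_subtractf sum_negf sum.distrib)
  have L2: "(\<Sum>a\<in>UNIV. \<Sum>b\<in>UNIV. \<Sum>d\<in>UNIV. G a c d * gi d b * T a b) = (\<Sum>a\<in>UNIV. \<Sum>b\<in>UNIV. \<Sum>l\<in>UNIV. gi a b * G l c a * T l b)"
    by (subst sum3_cba) (simp add: mult_ac)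
  have L3: "(\<Sum>a\<in>UNIV. \<Sum>b\<in>UNIV. \<Sum>d\<in>UNIV. G b c d * gi a d * T a b) = (\<Sum>a\<in>UNIV. \<Sum>b\<in>UNIV. \<Sum>l\<in>UNIV. gi a b * G l c b * T a l)"
    by (subst sum3_acb) (simp add: mult_ac)
  have r: "(\<Sum>a\<in>UNIV. \<Sum>b\<in>UNIV. gi a b * (dT c a b - (\<Sum>l\<in>UNIV. G l c a * T l b) - (\<Sum>l\<in>UNIV. G l c b * T a l)))
     = (\<Sum>a\<in>UNIV. \<Sum>b\<in>UNIV. gi a b * dT c a b) - (\<Sum>a\<in>UNIV. \<Sum>b\<in>UNIV. \<Sum>l\<in>UNIV. gi a b * G l c a * T l b)
       - (\<Sum>a\<in>UNIV. \<Sum>b\<in>UNIV. \<Sum>l\<in>UNIV. gi a b * G l c b * T a l)"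
    by (simp add: algebra_simps sum.distrib sum_subtractf sum_distrib_left)
  have l: "(\<Sum>a\<in>UNIV. \<Sum>b\<in>UNIV. dgi c a b * T a b + gi a b * dT c a b)
     = (\<Sum>a\<in>UNIV. \<Sum>b\<in>UNIV. dgi c a b * T a b) + (\<Sum>a\<in>UNIV. \<Sum>b\<in>UNIV. gi a b * dT c a b)"
    by (simp add: sum.distrib)
  show ?thesis using l r L1 L2 L3 by linarith
qed

lemma raised_derivative_components:
  fixes G :: "'i::finite \<Rightarrow> 'i \<Rightarrow> 'i \<Rightarrow> real" and gi T :: "'i \<Rightarrow> 'i \<Rightarrow> real"
    and dgi dT :: "'i \<Rightarrow> 'i \<Rightarrow> 'i \<Rightarrow> real"
  assumes dgi_eq: "\<And>c a b. dgi c a b = - (\<Sum>d\<in>UNIV. G a c d * gi d b) - (\<Sum>d\<in>UNIV. G b c d * gi a d)"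
  shows "(\<Sum>p\<in>UNIV. dgi c r p * T p v + gi r p * dT c p v) + (\<Sum>l\<in>UNIV. G r c l * (\<Sum>p\<in>UNIV. gi l p * T p v))
           - (\<Sum>l\<in>UNIV. G l c v * (\<Sum>p\<in>UNIV. gi r p * T p l))
       = (\<Sum>p\<in>UNIV. gi r p * (dT c p v - (\<Sum>l\<in>UNIV. G l c p * T l v) - (\<Sum>l\<in>UNIV. G l c v * T p l)))"
proof -
  have A1: "(\<Sum>p\<in>UNIV. dgi c r p * T p v) = - (\<Sum>p\<in>UNIV. \<Sum>d\<in>UNIV. G r c d * gi d p * T p v) - (\<Sum>p\<in>UNIV. \<Sum>d\<in>UNIV. G p c d * gi r d * T p v)"
    by (simp add: dgi_eq algebra_simps sum_distrib_right sum_distrib_left sum_subtractf sum_negf sum.distrib)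
  have A3: "(\<Sum>l\<in>UNIV. G r c l * (\<Sum>p\<in>UNIV. gi l p * T p v)) = (\<Sum>p\<in>UNIV. \<Sum>d\<in>UNIV. G r c d * gi d p * T p v)"
    by (subst sum.swap) (simp add: sum_distrib_left mult_ac)
  have A4: "(\<Sum>l\<in>UNIV. G l c v * (\<Sum>p\<in>UNIV. gi r p * T p l)) = (\<Sum>p\<in>UNIV. \<Sum>l\<in>UNIV. gi r p * G l c v * T p l)"
    by (subst sum.swap) (simp add: sum_distrib_left mult_ac)
  have B2: "(\<Sum>p\<in>UNIV. \<Sum>d\<in>UNIV. G p c d * gi r d * T p v) = (\<Sum>p\<in>UNIV. \<Sum>l\<in>UNIV. gi r p * G l c p * T l v)"
    by (subst sum.swap) (simp add: mult_ac)
  have r: "(\<Sum>p\<in>UNIV. gi r p * (dT c p v - (\<Sum>l\<in>UNIV. G l c p * T l v) - (\<Sum>l\<in>UNIV. G l c v * T p l)))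
     = (\<Sum>p\<in>UNIV. gi r p * dT c p v) - (\<Sum>p\<in>UNIV. \<Sum>l\<in>UNIV. gi r p * G l c p * T l v) - (\<Sum>p\<in>UNIV. \<Sum>l\<in>UNIV. gi r p * G l c v * T p l)"
    by (simp add: algebra_simps sum.distrib sum_subtractf sum_distrib_left)
  have l: "(\<Sum>p\<in>UNIV. dgi c r p * T p v + gi r p * dT c p v) = (\<Sum>p\<in>UNIV. dgi c r p * T p v) + (\<Sum>p\<in>UNIV. gi r p * dT c p v)"
    by (simp add: sum.distrib)
  show ?thesis using l r A1 A3 A4 B2 by linarith
qed

lemma trace_derivative_components4:
  fixes G :: "'i::finite \<Rightarrow> 'i \<Rightarrow> 'i \<Rightarrow> real" and gi :: "'i \<Rightarrow> 'i \<Rightarrow> real"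
    and dgi :: "'i \<Rightarrow> 'i \<Rightarrow> 'i \<Rightarrow> real" and T :: "'i \<Rightarrow> 'i \<Rightarrow> 'i \<Rightarrow> 'i \<Rightarrow> real"
    and dT :: "'i \<Rightarrow> 'i \<Rightarrow> 'i \<Rightarrow> 'i \<Rightarrow> 'i \<Rightarrow> real"
  assumes dgi_eq: "\<And>c a b. dgi c a b = - (\<Sum>d\<in>UNIV. G a c d * gi d b) - (\<Sum>d\<in>UNIV. G b c d * gi a d)"
  shows "(\<Sum>e\<in>UNIV. \<Sum>s\<in>UNIV. dgi c e s * T r s v e + gi e s * dT c r s v e)
      + (\<Sum>l\<in>UNIV. G r c l * (\<Sum>e\<in>UNIV. \<Sum>s\<in>UNIV. gi e s * T l s v e))
      - (\<Sum>l\<in>UNIV. G l c v * (\<Sum>e\<in>UNIV. \<Sum>s\<in>UNIV. gi e s * T r s l e))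
   = (\<Sum>e\<in>UNIV. \<Sum>s\<in>UNIV. gi e s * (dT c r s v e + (\<Sum>l\<in>UNIV. G r c l * T l s v e)
        - (\<Sum>l\<in>UNIV. G l c s * T r l v e) - (\<Sum>l\<in>UNIV. G l c v * T r s l e) - (\<Sum>l\<in>UNIV. G l c e * T r s v l)))"
proof -
  have A1: "(\<Sum>e\<in>UNIV. \<Sum>s\<in>UNIV. dgi c e s * T r s v e) =
     - (\<Sum>e\<in>UNIV. \<Sum>s\<in>UNIV. \<Sum>d\<in>UNIV. G e c d * gi d s * T r s v e) - (\<Sum>e\<in>UNIV. \<Sum>s\<in>UNIV. \<Sum>d\<in>UNIV. G s c d * gi e d * T r s v e)"
    by (simp add: dgi_eq algebra_simps sum_distrib_right sum_distrib_left sum_subtractf sum_negf sum.distrib)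
  have B1: "(\<Sum>e\<in>UNIV. \<Sum>s\<in>UNIV. \<Sum>d\<in>UNIV. G e c d * gi d s * T r s v e) = (\<Sum>e\<in>UNIV. \<Sum>s\<in>UNIV. \<Sum>l\<in>UNIV. gi e s * G l c e * T r s v l)"
    by (subst sum3_cba) (simp add: mult_ac)
  have B2: "(\<Sum>e\<in>UNIV. \<Sum>s\<in>UNIV. \<Sum>d\<in>UNIV. G s c d * gi e d * T r s v e) = (\<Sum>e\<in>UNIV. \<Sum>s\<in>UNIV. \<Sum>l\<in>UNIV. gi e s * G l c s * T r l v e)"
    by (subst sum3_acb) (simp add: mult_ac)
  have A3: "(\<Sum>l\<in>UNIV. G r c l * (\<Sum>e\<in>UNIV. \<Sum>s\<in>UNIV. gi e s * T l s v e)) = (\<Sum>e\<in>UNIV. \<Sum>s\<in>UNIV. \<Sum>l\<in>UNIV. gi e s * G r c l * T l s v e)"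
  proof -
    have "(\<Sum>l\<in>UNIV. G r c l * (\<Sum>e\<in>UNIV. \<Sum>s\<in>UNIV. gi e s * T l s v e)) = (\<Sum>l\<in>UNIV. \<Sum>e\<in>UNIV. \<Sum>s\<in>UNIV. gi e s * G r c l * T l s v e)"
      by (simp add: sum_distrib_left mult_ac)
    also have "\<dots> = (\<Sum>e\<in>UNIV. \<Sum>s\<in>UNIV. \<Sum>l\<in>UNIV. gi e s * G r c l * T l s v e)" by (rule sum3_bca)
    finally show ?thesis .
  qed
  have A4: "(\<Sum>l\<in>UNIV. G l c v * (\<Sum>e\<in>UNIV. \<Sum>s\<in>UNIV. gi e s * T r s l e)) = (\<Sum>e\<in>UNIV. \<Sum>s\<in>UNIV. \<Sum>l\<in>UNIV. gi e s * G l c v * T r s l e)"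
  proof -
    have "(\<Sum>l\<in>UNIV. G l c v * (\<Sum>e\<in>UNIV. \<Sum>s\<in>UNIV. gi e s * T r s l e)) = (\<Sum>l\<in>UNIV. \<Sum>e\<in>UNIV. \<Sum>s\<in>UNIV. gi e s * G l c v * T r s l e)"
      by (simp add: sum_distrib_left mult_ac)
    also have "\<dots> = (\<Sum>e\<in>UNIV. \<Sum>s\<in>UNIV. \<Sum>l\<in>UNIV. gi e s * G l c v * T r s l e)" by (rule sum3_bca)
    finally show ?thesis .
  qed
  have r: "(\<Sum>e\<in>UNIV. \<Sum>s\<in>UNIV. gi e s * (dT c r s v e + (\<Sum>l\<in>UNIV. G r c l * T l s v e)
        - (\<Sum>l\<in>UNIV. G l c s * T r l v e) - (\<Sum>l\<in>UNIV. G l c v * T r s l e) - (\<Sum>l\<in>UNIV. G l c e * T r s v l)))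
     = (\<Sum>e\<in>UNIV. \<Sum>s\<in>UNIV. gi e s * dT c r s v e) + (\<Sum>e\<in>UNIV. \<Sum>s\<in>UNIV. \<Sum>l\<in>UNIV. gi e s * G r c l * T l s v e)
       - (\<Sum>e\<in>UNIV. \<Sum>s\<in>UNIV. \<Sum>l\<in>UNIV. gi e s * G l c s * T r l v e)
       - (\<Sum>e\<in>UNIV. \<Sum>s\<in>UNIV. \<Sum>l\<in>UNIV. gi e s * G l c v * T r s l e)
       - (\<Sum>e\<in>UNIV. \<Sum>s\<in>UNIV. \<Sum>l\<in>UNIV. gi e s * G l c e * T r s v l)"
    by (simp add: algebra_simps sum.distrib sum_subtractf sum_distrib_left)
  have l: "(\<Sum>e\<in>UNIV. \<Sum>s\<in>UNIV. dgi c e s * T r s v e + gi e s * dT c r s v e)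
     = (\<Sum>e\<in>UNIV. \<Sum>s\<in>UNIV. dgi c e s * T r s v e) + (\<Sum>e\<in>UNIV. \<Sum>s\<in>UNIV. gi e s * dT c r s v e)"
    by (simp add: sum.distrib)
  show ?thesis using l r A1 B1 B2 A3 A4 by linarith
qed

text \<open>\<open>ddg_eq\<close> is metric compatibility differentiated once more; with the symmetry
  \<open>ddg\<close> of second derivatives of \<open>g\<close>, the quadratic Christoffel terms pair off.\<close>

lemma lowered_riemann_antisym_components:
  fixes g :: "'i::finite \<Rightarrow> 'i \<Rightarrow> real" and dg G :: "'i \<Rightarrow> 'i \<Rightarrow> 'i \<Rightarrow> real"
    and dG ddg R :: "'i \<Rightarrow> 'i \<Rightarrow> 'i \<Rightarrow> 'i \<Rightarrow> real"
  assumes g_sym: "\<And>a b. g a b = g b a"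
    and dg_eq: "\<And>c a b. dg c a b = (\<Sum>d\<in>UNIV. G d c a * g d b) + (\<Sum>d\<in>UNIV. G d c b * g a d)"
    and ddg_sym: "\<And>m c a b. ddg m c a b = ddg c m a b"
    and ddg_eq: "\<And>m c a b. ddg m c a b = (\<Sum>d\<in>UNIV. dG m d c a * g d b + G d c a * dg m d b)
                                 + (\<Sum>d\<in>UNIV. dG m d c b * g a d + G d c b * dg m a d)"
    and R_def: "\<And>r s m v. R r s m v = dG m r v s - dG v r m s + (\<Sum>l\<in>UNIV. G r m l * G l v s) - (\<Sum>l\<in>UNIV. G r v l * G l m s)"
  shows "(\<Sum>d\<in>UNIV. g b d * R d a m v) + (\<Sum>d\<in>UNIV. g a d * R d b m v) = 0"
proof -
  define P1 where "P1 = (\<Sum>d\<in>UNIV. dG m d v a * g d b)"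
  define P2 where "P2 = (\<Sum>d\<in>UNIV. dG v d m a * g d b)"
  define P3 where "P3 = (\<Sum>d\<in>UNIV. dG m d v b * g a d)"
  define P4 where "P4 = (\<Sum>d\<in>UNIV. dG v d m b * g a d)"
  define Q1 where "Q1 = (\<Sum>d\<in>UNIV. G d v a * dg m d b)"
  define Q2 where "Q2 = (\<Sum>d\<in>UNIV. G d m a * dg v d b)"
  define Q3 where "Q3 = (\<Sum>d\<in>UNIV. G d v b * dg m a d)"
  define Q4 where "Q4 = (\<Sum>d\<in>UNIV. G d m b * dg v a d)"
  have star: "P1 + Q1 + P3 + Q3 - P2 - Q2 - P4 - Q4 = 0"
    using ddg_eq[of m v a b] ddg_eq[of v m a b] ddg_sym[of m v a b]
    unfolding P1_def P2_def P3_def P4_def Q1_def Q2_def Q3_def Q4_def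
    by (simp add: sum.distrib)
  define Q1a where "Q1a = (\<Sum>d\<in>UNIV. \<Sum>l\<in>UNIV. G d v a * G l m d * g l b)"
  define Q1b where "Q1b = (\<Sum>d\<in>UNIV. \<Sum>l\<in>UNIV. G d v a * G l m b * g d l)"
  define Q2a where "Q2a = (\<Sum>d\<in>UNIV. \<Sum>l\<in>UNIV. G d m a * G l v d * g l b)"
  define Q2b where "Q2b = (\<Sum>d\<in>UNIV. \<Sum>l\<in>UNIV. G d m a * G l v b * g d l)"
  define Q3a where "Q3a = (\<Sum>d\<in>UNIV. \<Sum>l\<in>UNIV. G d v b * G l m a * g l d)"
  define Q3b where "Q3b = (\<Sum>d\<in>UNIV. \<Sum>l\<in>UNIV. G d v b * G l m d * g a l)"
  define Q4a where "Q4a = (\<Sum>d\<in>UNIV. \<Sum>l\<in>UNIV. G d m b * G l v a * g l d)"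
  define Q4b where "Q4b = (\<Sum>d\<in>UNIV. \<Sum>l\<in>UNIV. G d m b * G l v d * g a l)"
  have q1: "Q1 = Q1a + Q1b" unfolding Q1_def Q1a_def Q1b_def
    by (simp add: dg_eq distrib_left sum.distrib sum_distrib_left mult_ac)
  have q2: "Q2 = Q2a + Q2b" unfolding Q2_def Q2a_def Q2b_def
    by (simp add: dg_eq distrib_left sum.distrib sum_distrib_left mult_ac)
  have q3: "Q3 = Q3a + Q3b" unfolding Q3_def Q3a_def Q3b_def
    by (simp add: dg_eq distrib_left sum.distrib sum_distrib_left mult_ac)
  have q4: "Q4 = Q4a + Q4b" unfolding Q4_def Q4a_def Q4b_def
    by (simp add: dg_eq distrib_left sum.distrib sum_distrib_left mult_ac)
  define W1 where "W1 = (\<Sum>d\<in>UNIV. \<Sum>l\<in>UNIV. g b d * G d m l * G l v a)"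
  define W2 where "W2 = (\<Sum>d\<in>UNIV. \<Sum>l\<in>UNIV. g b d * G d v l * G l m a)"
  define W3 where "W3 = (\<Sum>d\<in>UNIV. \<Sum>l\<in>UNIV. g a d * G d m l * G l v b)"
  define W4 where "W4 = (\<Sum>d\<in>UNIV. \<Sum>l\<in>UNIV. g a d * G d v l * G l m b)"
  have t1: "(\<Sum>d\<in>UNIV. g b d * R d a m v) = P1 - P2 + W1 - W2"
    unfolding P1_def P2_def W1_def W2_def
    by (simp add: R_def algebra_simps sum.distrib sum_subtractf sum_distrib_left g_sym)
  have t2: "(\<Sum>d\<in>UNIV. g a d * R d b m v) = P3 - P4 + W3 - W4"
    unfolding P3_def P4_def W3_def W4_def
    by (simp add: R_def algebra_simps sum.distrib sum_subtractf sum_distrib_left g_sym)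
  have e1: "Q1a = W1" unfolding Q1a_def W1_def by (subst sum.swap) (simp add: g_sym mult_ac)
  have e2: "Q2a = W2" unfolding Q2a_def W2_def by (subst sum.swap) (simp add: g_sym mult_ac)
  have e3: "Q3b = W3" unfolding Q3b_def W3_def by (subst sum.swap) (simp add: g_sym mult_ac)
  have e4: "Q4b = W4" unfolding Q4b_def W4_def by (subst sum.swap) (simp add: g_sym mult_ac)
  have e5: "Q1b = Q4a" unfolding Q1b_def Q4a_def by (subst sum.swap) (simp add: g_sym mult_ac)
  have e6: "Q2b = Q3a" unfolding Q2b_def Q3a_def by (subst sum.swap) (simp add: g_sym mult_ac)
  show ?thesis using star q1 q2 q3 q4 t1 t2 e1 e2 e3 e4 e5 e6 by linarith
qed

lemma riemann_trace_ricci_components: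
  fixes g gi :: "'i::finite \<Rightarrow> 'i \<Rightarrow> real" and R :: "'i \<Rightarrow> 'i \<Rightarrow> 'i \<Rightarrow> 'i \<Rightarrow> real"
    and Ric :: "'i \<Rightarrow> 'i \<Rightarrow> real"
  assumes gi_g: "\<And>a c. (\<Sum>b\<in>UNIV. gi a b * g b c) = (if a = c then 1 else 0)"
    and lowered_R_antisym: "\<And>a b m v. (\<Sum>d\<in>UNIV. g b d * R d a m v) + (\<Sum>d\<in>UNIV. g a d * R d b m v) = 0"
    and R_antisym: "\<And>r s m v. R r s m v = - R r s v m"
    and Ric_def: "\<And>s v. Ric s v = (\<Sum>r\<in>UNIV. R r s r v)"
  shows "(\<Sum>e\<in>UNIV. \<Sum>s\<in>UNIV. gi e s * R l s v e) = (\<Sum>p\<in>UNIV. gi l p * Ric p v)"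
proof -
  define A where "A p s v e = (\<Sum>d\<in>UNIV. g p d * R d s v e)" for p s v e
  have s1: "R l s v e = (\<Sum>p\<in>UNIV. gi l p * A p s v e)" for l s v e
    unfolding A_def by (rule raise_lowered_components[OF gi_g, symmetric])
  have s2: "(\<Sum>s\<in>UNIV. gi e s * A s p v e) = R e p v e" for e p v
    unfolding A_def by (rule raise_lowered_components[OF gi_g])
  have Aant: "A p s v e = - A s p v e" for p s v e
    using lowered_R_antisym[of s p v e] unfolding A_def by linarith
  have "(\<Sum>e\<in>UNIV. \<Sum>s\<in>UNIV. gi e s * R l s v e) = (\<Sum>e\<in>UNIV. \<Sum>s\<in>UNIV. \<Sum>p\<in>UNIV. - (gi l p * (gi e s * A s p v e)))"
  proof (intro sum.cong refl)
    fix e s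
    have "R l s v e = (\<Sum>p\<in>UNIV. gi l p * (- A s p v e))" by (simp only: s1 Aant[of _ s v e])
    then show "gi e s * R l s v e = (\<Sum>p\<in>UNIV. - (gi l p * (gi e s * A s p v e)))"
      by (simp add: sum_distrib_left sum_negf mult_ac)
  qed
  also have "\<dots> = (\<Sum>p\<in>UNIV. \<Sum>e\<in>UNIV. \<Sum>s\<in>UNIV. - (gi l p * (gi e s * A s p v e)))"
    by (rule sum3_cab)
  also have "\<dots> = (\<Sum>p\<in>UNIV. - (gi l p * (\<Sum>e\<in>UNIV. (\<Sum>s\<in>UNIV. gi e s * A s p v e))))"
    by (simp add: sum_distrib_left sum_negf)
  also have "\<dots> = (\<Sum>p\<in>UNIV. - (gi l p * (\<Sum>e\<in>UNIV. R e p v e)))" by (simp only: s2)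
  also have "\<dots> = (\<Sum>p\<in>UNIV. gi l p * Ric p v)"
  proof -
    have rr: "(\<Sum>e\<in>UNIV. R e p v e) = - Ric p v" for p
      unfolding Ric_def sum_negf[symmetric] by (rule sum.cong[OF refl]) (rule R_antisym)
    show ?thesis by (simp add: rr)
  qed
  finally show ?thesis .
qed

lemma riemann_trace_zero_components:
  fixes g gi :: "'i::finite \<Rightarrow> 'i \<Rightarrow> real" and R :: "'i \<Rightarrow> 'i \<Rightarrow> 'i \<Rightarrow> 'i \<Rightarrow> real"
  assumes gi_g: "\<And>a c. (\<Sum>b\<in>UNIV. gi a b * g b c) = (if a = c then 1 else 0)"
    and gi_sym: "\<And>a b. gi a b = gi b a"
    and lowered_R_antisym: "\<And>a b m v. (\<Sum>d\<in>UNIV. g b d * R d a m v) + (\<Sum>d\<in>UNIV. g a d * R d b m v) = 0"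
  shows "(\<Sum>r\<in>UNIV. R r r m v) = 0"
proof -
  have 1: "(\<Sum>a\<in>UNIV. \<Sum>b\<in>UNIV. gi a b * (\<Sum>d\<in>UNIV. g b d * R d a m v)) = (\<Sum>r\<in>UNIV. R r r m v)"
    by (rule sum.cong[OF refl]) (rule raise_lowered_components[OF gi_g])
  have 2: "(\<Sum>a\<in>UNIV. \<Sum>b\<in>UNIV. gi a b * (\<Sum>d\<in>UNIV. g a d * R d b m v)) = (\<Sum>r\<in>UNIV. R r r m v)"
  proof -
    have "(\<Sum>a\<in>UNIV. \<Sum>b\<in>UNIV. gi a b * (\<Sum>d\<in>UNIV. g a d * R d b m v))
       = (\<Sum>b\<in>UNIV. \<Sum>a\<in>UNIV. gi b a * (\<Sum>d\<in>UNIV. g a d * R d b m v))"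
      by (subst sum.swap) (simp only: gi_sym)
    also have "\<dots> = (\<Sum>r\<in>UNIV. R r r m v)"
      by (rule sum.cong[OF refl]) (rule raise_lowered_components[OF gi_g])
    finally show ?thesis .
  qed
  have "(\<Sum>a\<in>UNIV. \<Sum>b\<in>UNIV. gi a b * ((\<Sum>d\<in>UNIV. g b d * R d a m v) + (\<Sum>d\<in>UNIV. g a d * R d b m v))) = 0"
    using lowered_R_antisym by simp
  then show ?thesis using 1 2 by (simp add: distrib_left sum.distrib)
qed

lemma ricci_sym_components:
  fixes G :: "'i::finite \<Rightarrow> 'i \<Rightarrow> 'i \<Rightarrow> real" and dG R :: "'i \<Rightarrow> 'i \<Rightarrow> 'i \<Rightarrow> 'i \<Rightarrow> real"
  assumes G_sym: "\<And>k i j. G k i j = G k j i" and dG_sym: "\<And>e k i j. dG e k i j = dG e k j i"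
    and R_def: "\<And>r s m v. R r s m v = dG m r v s - dG v r m s + (\<Sum>l\<in>UNIV. G r m l * G l v s) - (\<Sum>l\<in>UNIV. G r v l * G l m s)"
    and R_trace_zero: "\<And>m v. (\<Sum>r\<in>UNIV. R r r m v) = 0"
  shows "(\<Sum>r\<in>UNIV. R r s r v) = (\<Sum>r\<in>UNIV. R r v r s)"
proof -
  have pw: "R r s r v - R r v r s + R r r v s = 0" for r
  proof -
    have a: "(\<Sum>l\<in>UNIV. G r r l * G l v s) = (\<Sum>l\<in>UNIV. G r r l * G l s v)" by (simp add: G_sym[of _ v s])
    have b: "(\<Sum>l\<in>UNIV. G r v l * G l r s) = (\<Sum>l\<in>UNIV. G r v l * G l s r)" by (simp add: G_sym[of _ r s])
    have c: "(\<Sum>l\<in>UNIV. G r s l * G l r v) = (\<Sum>l\<in>UNIV. G r s l * G l v r)" by (simp add: G_sym[of _ r v])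
    show ?thesis unfolding R_def using a b c dG_sym[of r r v s] dG_sym[of v r s r] dG_sym[of s r v r] by linarith
  qed
  have "(\<Sum>r\<in>UNIV. R r s r v - R r v r s + R r r v s) = 0" using pw by simp
  then show ?thesis using R_trace_zero[of v s] by (simp add: sum.distrib sum_subtractf)
qed

section \<open>Bianchi identities\<close>

text \<open>Pointwise data of a connection: Christoffel symbols \<open>G\<close> with their first and
  second partial derivatives \<open>dG\<close>, \<open>ddG\<close> (derivative index first), the Riemann
  tensor \<open>R\<close> and its partial derivative \<open>dR\<close>.\<close>

locale curvature_components =
  fixes G :: "'i::finite \<Rightarrow> 'i \<Rightarrow> 'i \<Rightarrow> real" and dG :: "'i \<Rightarrow> 'i \<Rightarrow> 'i \<Rightarrow> 'i \<Rightarrow> real"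
    and ddG :: "'i \<Rightarrow> 'i \<Rightarrow> 'i \<Rightarrow> 'i \<Rightarrow> 'i \<Rightarrow> real"
    and R :: "'i \<Rightarrow> 'i \<Rightarrow> 'i \<Rightarrow> 'i \<Rightarrow> real" and dR :: "'i \<Rightarrow> 'i \<Rightarrow> 'i \<Rightarrow> 'i \<Rightarrow> 'i \<Rightarrow> real"
  assumes ddG_sym: "\<And>f e k i j. ddG f e k i j = ddG e f k i j"
    and G_sym: "\<And>k i j. G k i j = G k j i"
    and R_def: "\<And>r s m v. R r s m v = dG m r v s - dG v r m s
        + (\<Sum>l\<in>UNIV. G r m l * G l v s) - (\<Sum>l\<in>UNIV. G r v l * G l m s)"
    and dR_def: "\<And>e r s m v. dR e r s m v = ddG e m r v s - ddG e v r m s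
        + (\<Sum>l\<in>UNIV. dG e r m l * G l v s + G r m l * dG e l v s)
        - (\<Sum>l\<in>UNIV. dG e r v l * G l m s + G r v l * dG e l m s)"
begin

definition cR :: "'i \<Rightarrow> 'i \<Rightarrow> 'i \<Rightarrow> 'i \<Rightarrow> 'i \<Rightarrow> real" where
  "cR e r s m v = dR e r s m v + (\<Sum>l\<in>UNIV. G r e l * R l s m v)
     - (\<Sum>l\<in>UNIV. G l e s * R r l m v) - (\<Sum>l\<in>UNIV. G l e m * R r s l v) - (\<Sum>l\<in>UNIV. G l e v * R r s m l)"

lemma R_antisym: "R r s m v = - R r s v m"
  by (simp add: R_def)

lemma cR_antisym: "cR e r s m v = - cR e r s v m"
proof -
  have "(\<Sum>l\<in>UNIV. G r e l * R l s v m) = - (\<Sum>l\<in>UNIV. G r e l * R l s m v)"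
    and "(\<Sum>l\<in>UNIV. G l e s * R r l v m) = - (\<Sum>l\<in>UNIV. G l e s * R r l m v)"
    and "(\<Sum>l\<in>UNIV. G l e v * R r s l m) = - (\<Sum>l\<in>UNIV. G l e v * R r s m l)"
    and "(\<Sum>l\<in>UNIV. G l e m * R r s v l) = - (\<Sum>l\<in>UNIV. G l e m * R r s l v)"
    by (subst R_antisym; simp add: sum_negf)+
  moreover have "dR e r s m v = - dR e r s v m"
    by (simp add: dR_def)
  ultimately show ?thesis
    unfolding cR_def by linarith
qed

text \<open>After expanding \<open>cR\<close>, the second derivatives cancel by symmetry of \<open>ddG\<close>, and
  the first-derivative and cubic terms cancel in the cyclic sum after reindexing.\<close>

lemma differential_bianchi: "cR e r s m v + cR m r s v e + cR v r s e m = 0"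
proof -
  define T1 where "T1 e m v = (\<Sum>l\<in>UNIV. \<Sum>k\<in>UNIV. G r e l * G l m k * G k v s)" for e m v
  define T2 where "T2 e m v = (\<Sum>l\<in>UNIV. \<Sum>k\<in>UNIV. G r e l * G l v k * G k m s)" for e m v
  define T3 where "T3 e m v = (\<Sum>l\<in>UNIV. \<Sum>k\<in>UNIV. G l e s * G r m k * G k v l)" for e m v
  define T4 where "T4 e m v = (\<Sum>l\<in>UNIV. \<Sum>k\<in>UNIV. G l e s * G r v k * G k m l)" for e m v
  define Si where "Si e m v l = dG e r m l * G l v s + G r m l * dG e l v s - dG e r v l * G l m s
     - G r v l * dG e l m s + G r e l * dG m l v s - G r e l * dG v l m s
     - G l e s * dG m r v l + G l e s * dG v r m l" for e m v l
  define Bi where "Bi e m v l = G l e m * R r s l v + G l e v * R r s m l" for e m v l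
  define DD where "DD e m v = ddG e m r v s - ddG e v r m s" for e m v
  have h1: "(\<Sum>l\<in>UNIV. G r e l * R l s m v)
      = (\<Sum>l\<in>UNIV. G r e l * dG m l v s - G r e l * dG v l m s) + T1 e m v - T2 e m v" for e m v
    by (simp add: R_def T1_def T2_def algebra_simps sum.distrib sum_subtractf sum_distrib_left)
  have h2: "(\<Sum>l\<in>UNIV. G l e s * R r l m v)
      = (\<Sum>l\<in>UNIV. G l e s * dG m r v l - G l e s * dG v r m l) + T3 e m v - T4 e m v" for e m v
    by (simp add: R_def T3_def T4_def algebra_simps sum.distrib sum_subtractf sum_distrib_left)
  have dec: "cR e r s m v = DD e m v + (\<Sum>l\<in>UNIV. Si e m v l) + T1 e m v - T2 e m v - T3 e m v
      + T4 e m v - (\<Sum>l\<in>UNIV. Bi e m v l)" for e m v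
    unfolding cR_def dR_def h1 h2 DD_def Si_def Bi_def
    by (simp add: sum.distrib sum_subtractf algebra_simps)
  have "DD e m v + DD m v e + DD v e m = 0"
    using ddG_sym[of m e r v s] ddG_sym[of v e r m s] ddG_sym[of v m r e s] by (simp add: DD_def)
  moreover have "(\<Sum>l\<in>UNIV. Si e m v l) + (\<Sum>l\<in>UNIV. Si m v e l) + (\<Sum>l\<in>UNIV. Si v e m l) = 0"
    by (simp add: Si_def algebra_simps flip: sum.distrib)
  moreover have "Bi e m v l + Bi m v e l + Bi v e m l = 0" for l
    unfolding Bi_def using G_sym[of l e m] G_sym[of l e v] G_sym[of l m v]
      R_antisym[of r s l v] R_antisym[of r s m l] R_antisym[of r s l e]
    by (simp add: algebra_simps)
  then have "(\<Sum>l\<in>UNIV. Bi e m v l) + (\<Sum>l\<in>UNIV. Bi m v e l) + (\<Sum>l\<in>UNIV. Bi v e m l) = 0"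
    by (simp flip: sum.distrib)
  moreover have T3_eq: "T3 a b c = T1 b c a" and T4_eq: "T4 a b c = T2 c a b" for a b c
    unfolding T1_def T2_def T3_def T4_def by (subst sum.swap; simp add: mult_ac)+
  ultimately show ?thesis
    unfolding dec T3_eq T4_eq by linarith
qed

end

locale metric_curvature_components = curvature_components G dG ddG R dR
  for G :: "'i::finite \<Rightarrow> 'i \<Rightarrow> 'i \<Rightarrow> real" and dG ddG R dR +
  fixes g gi Ric :: "'i \<Rightarrow> 'i \<Rightarrow> real" and dg dgi dRic :: "'i \<Rightarrow> 'i \<Rightarrow> 'i \<Rightarrow> real"
    and dScal :: "'i \<Rightarrow> real"
  assumes gi_sym: "\<And>a b. gi a b = gi b a"
    and gi_g: "\<And>a c. (\<Sum>b\<in>UNIV. gi a b * g b c) = (if a = c then 1 else 0)"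
    and dg_eq: "\<And>c a b. dg c a b = (\<Sum>d\<in>UNIV. G d c a * g d b) + (\<Sum>d\<in>UNIV. G d c b * g a d)"
    and dgi_eq: "\<And>c a b. dgi c a b = - (\<Sum>d\<in>UNIV. G a c d * gi d b) - (\<Sum>d\<in>UNIV. G b c d * gi a d)"
    and Ric_def: "\<And>s v. Ric s v = (\<Sum>r\<in>UNIV. R r s r v)"
    and dRic_def: "\<And>e s v. dRic e s v = (\<Sum>r\<in>UNIV. dR e r s r v)"
    and dScal_def: "\<And>c. dScal c = (\<Sum>s\<in>UNIV. \<Sum>v\<in>UNIV. dgi c s v * Ric s v + gi s v * dRic c s v)"
    and R_trace: "\<And>l v. (\<Sum>e\<in>UNIV. \<Sum>s\<in>UNIV. gi e s * R l s v e) = (\<Sum>p\<in>UNIV. gi l p * Ric p v)"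
    and dR_trace: "\<And>r v. (\<Sum>e\<in>UNIV. \<Sum>s\<in>UNIV. dgi r e s * R r s v e + gi e s * dR r r s v e)
                 = (\<Sum>p\<in>UNIV. dgi r r p * Ric p v + gi r p * dRic r p v)"
begin

definition cRic :: "'i \<Rightarrow> 'i \<Rightarrow> 'i \<Rightarrow> real" where
  "cRic e s v = dRic e s v - (\<Sum>l\<in>UNIV. G l e s * Ric l v) - (\<Sum>l\<in>UNIV. G l e v * Ric s l)"

lemma cR_trace: "(\<Sum>r\<in>UNIV. cR e r s r v) = cRic e s v"
proof -
  have "(\<Sum>r\<in>UNIV. \<Sum>l\<in>UNIV. G l e s * R r l r v) = (\<Sum>l\<in>UNIV. G l e s * Ric l v)"
    and "(\<Sum>r\<in>UNIV. \<Sum>l\<in>UNIV. G l e v * R r s r l) = (\<Sum>l\<in>UNIV. G l e v * Ric s l)"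
    by (subst sum.swap; simp add: Ric_def sum_distrib_left)+
  moreover have "(\<Sum>r\<in>UNIV. \<Sum>l\<in>UNIV. G l e r * R r s l v) = (\<Sum>r\<in>UNIV. \<Sum>l\<in>UNIV. G r e l * R l s r v)"
    by (rule sum.swap)
  moreover have "(\<Sum>r\<in>UNIV. cR e r s r v) = dRic e s v + (\<Sum>r\<in>UNIV. \<Sum>l\<in>UNIV. G r e l * R l s r v)
      - (\<Sum>r\<in>UNIV. \<Sum>l\<in>UNIV. G l e s * R r l r v) - (\<Sum>r\<in>UNIV. \<Sum>l\<in>UNIV. G l e r * R r s l v)
      - (\<Sum>r\<in>UNIV. \<Sum>l\<in>UNIV. G l e v * R r s r l)"
    by (simp add: cR_def dRic_def sum.distrib sum_subtractf)
  ultimately show ?thesis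
    unfolding cRic_def by linarith
qed

lemma once_contracted_bianchi: "cRic e s v + (\<Sum>r\<in>UNIV. cR r r s v e) - cRic v s e = 0"
proof -
  have "(\<Sum>r\<in>UNIV. cR e r s r v + cR r r s v e + cR v r s e r) = 0"
    using differential_bianchi by simp
  moreover have "(\<Sum>r\<in>UNIV. cR v r s e r) = - cRic v s e"
    using cR_trace[of v s e] cR_antisym[of v _ s e] by (simp add: sum_negf)
  ultimately show ?thesis
    using cR_trace[of e s v] by (simp add: sum.distrib)
qed

lemma dScal_eq_trace_cRic: "dScal v = (\<Sum>e\<in>UNIV. \<Sum>s\<in>UNIV. gi e s * cRic v s e)"
proof -
  have "dScal v = (\<Sum>a\<in>UNIV. \<Sum>b\<in>UNIV. gi a b * cRic v a b)"
    unfolding dScal_def cRic_def by (rule trace_derivative_components[OF dgi_eq])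
  then show ?thesis
    by (subst sum.swap) (simp add: gi_sym)
qed

lemma raised_trace_cR: "(\<Sum>e\<in>UNIV. \<Sum>s\<in>UNIV. gi e s * cR r r s v e) = (\<Sum>p\<in>UNIV. gi r p * cRic r p v)"
proof -
  have "(\<Sum>e\<in>UNIV. \<Sum>s\<in>UNIV. gi e s * cR r r s v e)
     = (\<Sum>e\<in>UNIV. \<Sum>s\<in>UNIV. dgi r e s * R r s v e + gi e s * dR r r s v e)
       + (\<Sum>l\<in>UNIV. G r r l * (\<Sum>e\<in>UNIV. \<Sum>s\<in>UNIV. gi e s * R l s v e))
       - (\<Sum>l\<in>UNIV. G l r v * (\<Sum>e\<in>UNIV. \<Sum>s\<in>UNIV. gi e s * R r s l e))"
    unfolding cR_def by (rule trace_derivative_components4[OF dgi_eq, symmetric])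
  also have "\<dots> = (\<Sum>p\<in>UNIV. dgi r r p * Ric p v + gi r p * dRic r p v)
       + (\<Sum>l\<in>UNIV. G r r l * (\<Sum>p\<in>UNIV. gi l p * Ric p v))
       - (\<Sum>l\<in>UNIV. G l r v * (\<Sum>p\<in>UNIV. gi r p * Ric p l))"
    by (simp only: dR_trace R_trace)
  also have "\<dots> = (\<Sum>p\<in>UNIV. gi r p * cRic r p v)"
    unfolding cRic_def by (rule raised_derivative_components[OF dgi_eq])
  finally show ?thesis .
qed

text \<open>Raising the first index of the once-contracted identity and contracting
  once more gives \<open>2 \<nabla>\<^sup>a Ric\<^sub>a\<^sub>b = \<nabla>\<^sub>b Scal\<close>.\<close>

lemma twice_contracted_bianchi: "(\<Sum>e\<in>UNIV. \<Sum>s\<in>UNIV. gi e s * cRic e s v) = 1/2 * dScal v"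
proof -
  have "(\<Sum>e\<in>UNIV. \<Sum>s\<in>UNIV. gi e s * (cRic e s v + (\<Sum>r\<in>UNIV. cR r r s v e) - cRic v s e)) = 0"
    using once_contracted_bianchi by simp
  then have "(\<Sum>e\<in>UNIV. \<Sum>s\<in>UNIV. gi e s * cRic e s v)
      + (\<Sum>r\<in>UNIV. \<Sum>e\<in>UNIV. \<Sum>s\<in>UNIV. gi e s * cR r r s v e) - dScal v = 0"
    unfolding dScal_eq_trace_cRic
    by (simp add: distrib_left right_diff_distrib sum.distrib sum_subtractf sum_distrib_left
        sum3_cab[of "\<lambda>e s r. gi e s * cR r r s v e"])
  then show ?thesis
    unfolding raised_trace_cR by simp
qed

lemma contracted_bianchi:
  fixes Scal :: real and E :: "'i \<Rightarrow> 'i \<Rightarrow> real" and dE :: "'i \<Rightarrow> 'i \<Rightarrow> 'i \<Rightarrow> real"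
  assumes E_def: "\<And>a b. E a b = Ric a b - 1/2 * Scal * g a b"
    and dE_def: "\<And>c a b. dE c a b = dRic c a b - (1/2 * dScal c * g a b + 1/2 * Scal * dg c a b)"
  shows "(\<Sum>a\<in>UNIV. \<Sum>c\<in>UNIV. gi a c * (dE c a b - (\<Sum>d\<in>UNIV. G d c a * E d b) - (\<Sum>d\<in>UNIV. G d c b * E a d))) = 0"
proof -
  have pointwise: "dE c a b - (\<Sum>d\<in>UNIV. G d c a * E d b) - (\<Sum>d\<in>UNIV. G d c b * E a d)
      = cRic c a b - 1/2 * dScal c * g a b" for a b c
  proof -
    have "(\<Sum>d\<in>UNIV. G d c a * E d b) = (\<Sum>d\<in>UNIV. G d c a * Ric d b) - 1/2 * Scal * (\<Sum>d\<in>UNIV. G d c a * g d b)"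
      and "(\<Sum>d\<in>UNIV. G d c b * E a d) = (\<Sum>d\<in>UNIV. G d c b * Ric a d) - 1/2 * Scal * (\<Sum>d\<in>UNIV. G d c b * g a d)"
      by (simp_all add: E_def right_diff_distrib sum_subtractf sum_distrib_left mult_ac)
    then show ?thesis
      unfolding dE_def cRic_def dg_eq by (simp add: algebra_simps)
  qed
  have "(\<Sum>a\<in>UNIV. \<Sum>c\<in>UNIV. gi a c * (cRic c a b - 1/2 * dScal c * g a b))
      = (\<Sum>a\<in>UNIV. \<Sum>c\<in>UNIV. gi a c * cRic c a b) - 1/2 * (\<Sum>a\<in>UNIV. \<Sum>c\<in>UNIV. gi a c * dScal c * g a b)"
    by (simp add: right_diff_distrib sum_subtractf sum_distrib_left mult_ac)
  also have "(\<Sum>a\<in>UNIV. \<Sum>c\<in>UNIV. gi a c * dScal c * g a b) = (\<Sum>c\<in>UNIV. dScal c * (\<Sum>a\<in>UNIV. gi c a * g a b))"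
    by (subst sum.swap) (simp add: sum_distrib_left gi_sym mult_ac)
  also have "(\<Sum>a\<in>UNIV. \<Sum>c\<in>UNIV. gi a c * cRic c a b) = (\<Sum>e\<in>UNIV. \<Sum>s\<in>UNIV. gi e s * cRic e s b)"
    by (subst sum.swap) (simp add: gi_sym)
  also have "\<dots> - 1/2 * (\<Sum>c\<in>UNIV. dScal c * (\<Sum>a\<in>UNIV. gi c a * g a b)) = 0"
    by (simp add: gi_g twice_contracted_bianchi)
  finally show ?thesis
    by (simp only: pointwise)
qed

end

section \<open>Projection onto the level surfaces\<close>

text \<open>The covariant product rule for \<open>n\<^sup>e E\<^sub>e\<^sub>b\<close>, written with the partial derivatives
  \<open>dnl\<close>, \<open>dgi\<close>, \<open>dE\<close> of \<open>n\<^sub>a\<close>, \<open>g\<^sup>a\<^sup>b\<close>, \<open>E\<^sub>a\<^sub>b\<close>.\<close>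

lemma normal_contraction_derivative_components:
  fixes G :: "'i::finite \<Rightarrow> 'i \<Rightarrow> 'i \<Rightarrow> real" and gi E :: "'i \<Rightarrow> 'i \<Rightarrow> real"
    and dgi dE :: "'i \<Rightarrow> 'i \<Rightarrow> 'i \<Rightarrow> real" and nl nu :: "'i \<Rightarrow> real" and dnl :: "'i \<Rightarrow> 'i \<Rightarrow> real"
  assumes dgi_eq: "\<And>c a b. dgi c a b = - (\<Sum>d\<in>UNIV. G a c d * gi d b) - (\<Sum>d\<in>UNIV. G b c d * gi a d)"
    and nu_def: "\<And>a. nu a = (\<Sum>b\<in>UNIV. gi a b * nl b)"
  shows "(\<Sum>e\<in>UNIV. (\<Sum>a\<in>UNIV. gi e a * (dnl c a - (\<Sum>k\<in>UNIV. G k c a * nl k))) * E e b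
            + nu e * (dE c e b - (\<Sum>k\<in>UNIV. G k c e * E k b) - (\<Sum>k\<in>UNIV. G k c b * E e k)))
       = (\<Sum>e\<in>UNIV. (\<Sum>a\<in>UNIV. dgi c e a * nl a + gi e a * dnl c a) * E e b + nu e * dE c e b)
         - (\<Sum>k\<in>UNIV. G k c b * (\<Sum>e\<in>UNIV. nu e * E e k))"
proof -
  have nup: "(\<Sum>a\<in>UNIV. gi e a * (dnl c a - (\<Sum>k\<in>UNIV. G k c a * nl k)))
        = (\<Sum>a\<in>UNIV. dgi c e a * nl a + gi e a * dnl c a) + (\<Sum>d\<in>UNIV. G e c d * nu d)" for e
  proof -
    have expand: "(\<Sum>a\<in>UNIV. gi e a * (dnl c a - (\<Sum>k\<in>UNIV. G k c a * nl k)))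
        = (\<Sum>a\<in>UNIV. gi e a * dnl c a) - (\<Sum>a\<in>UNIV. \<Sum>k\<in>UNIV. gi e a * G k c a * nl k)"
      by (simp add: right_diff_distrib sum_subtractf sum_distrib_left mult_ac)
    have dgi_term: "(\<Sum>a\<in>UNIV. dgi c e a * nl a) = - (\<Sum>a\<in>UNIV. \<Sum>d\<in>UNIV. G e c d * gi d a * nl a) - (\<Sum>a\<in>UNIV. \<Sum>d\<in>UNIV. G a c d * gi e d * nl a)"
      by (simp add: dgi_eq algebra_simps sum_subtractf sum.distrib sum_distrib_left sum_distrib_right sum_negf)
    have nu_term: "(\<Sum>a\<in>UNIV. \<Sum>d\<in>UNIV. G e c d * gi d a * nl a) = (\<Sum>d\<in>UNIV. G e c d * nu d)"
      by (subst sum.swap) (simp add: nu_def sum_distrib_left mult_ac)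
    have christoffel_term: "(\<Sum>a\<in>UNIV. \<Sum>d\<in>UNIV. G a c d * gi e d * nl a) = (\<Sum>a\<in>UNIV. \<Sum>k\<in>UNIV. gi e a * G k c a * nl k)"
      by (subst sum.swap) (simp add: mult_ac)
    show ?thesis using expand dgi_term nu_term christoffel_term by (simp add: sum.distrib)
  qed
  have s1: "(\<Sum>e\<in>UNIV. \<Sum>d\<in>UNIV. G e c d * nu d * E e b) = (\<Sum>e\<in>UNIV. \<Sum>k\<in>UNIV. nu e * G k c e * E k b)"
    by (subst sum.swap) (simp add: mult_ac)
  have l: "(\<Sum>e\<in>UNIV. (\<Sum>a\<in>UNIV. gi e a * (dnl c a - (\<Sum>k\<in>UNIV. G k c a * nl k))) * E e b
            + nu e * (dE c e b - (\<Sum>k\<in>UNIV. G k c e * E k b) - (\<Sum>k\<in>UNIV. G k c b * E e k)))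
     = (\<Sum>e\<in>UNIV. (\<Sum>a\<in>UNIV. dgi c e a * nl a + gi e a * dnl c a) * E e b) + (\<Sum>e\<in>UNIV. \<Sum>d\<in>UNIV. G e c d * nu d * E e b)
       + (\<Sum>e\<in>UNIV. nu e * dE c e b) - (\<Sum>e\<in>UNIV. \<Sum>k\<in>UNIV. nu e * G k c e * E k b)
       - (\<Sum>e\<in>UNIV. \<Sum>k\<in>UNIV. nu e * G k c b * E e k)"
    by (simp only: nup) (simp add: algebra_simps sum.distrib sum_subtractf sum_distrib_left sum_distrib_right)
  have r: "(\<Sum>k\<in>UNIV. G k c b * (\<Sum>e\<in>UNIV. nu e * E e k)) = (\<Sum>e\<in>UNIV. \<Sum>k\<in>UNIV. nu e * G k c b * E e k)"
    by (subst sum.swap) (simp add: sum_distrib_left mult_ac)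
  show ?thesis using l s1 r by (simp add: sum.distrib)
qed

text \<open>Pointwise data along the foliation: \<open>nl\<close> and \<open>nu\<close> are \<open>n\<^sub>a\<close> and \<open>n\<^sup>a\<close>,
  \<open>cn c a\<close> is \<open>\<nabla>\<^sub>c n\<^sub>a\<close>, and \<open>E\<close> is a symmetric tensor with covariant derivative
  \<open>cE c a b = \<nabla>\<^sub>c E\<^sub>a\<^sub>b\<close>, divergence free and orthogonal to \<open>n\<close>; \<open>leibniz\<close> is the derivative
  of \<open>n\<^sup>e E\<^sub>e\<^sub>b = 0\<close>.\<close>

locale normal_projection_components =
  fixes gi E :: "'i::finite \<Rightarrow> 'i \<Rightarrow> real" and nl nu :: "'i \<Rightarrow> real" and cn :: "'i \<Rightarrow> 'i \<Rightarrow> real"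
    and cE :: "'i \<Rightarrow> 'i \<Rightarrow> 'i \<Rightarrow> real" and eps :: real
  assumes gi_sym: "\<And>a b. gi a b = gi b a"
    and nu_def: "\<And>a. nu a = (\<Sum>b\<in>UNIV. gi a b * nl b)"
    and E_sym: "\<And>a b. E a b = E b a"
    and normal_E: "\<And>b. (\<Sum>e\<in>UNIV. nu e * E e b) = 0"
    and leibniz: "\<And>c b. (\<Sum>e\<in>UNIV. (\<Sum>a\<in>UNIV. gi e a * cn c a) * E e b + nu e * cE c e b) = 0"
    and div_E: "\<And>b. (\<Sum>a\<in>UNIV. \<Sum>c\<in>UNIV. gi a c * cE c a b) = 0"
begin

definition proj :: "'i \<Rightarrow> 'i \<Rightarrow> real" where
  "proj e a = (if e = a then 1 else 0) - eps * nu e * nl a"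

definition proj_up :: "'i \<Rightarrow> 'i \<Rightarrow> real" where
  "proj_up a c = gi a c - eps * nu a * nu c"

definition dnu :: "'i \<Rightarrow> 'i \<Rightarrow> real" where
  "dnu c e = (\<Sum>a\<in>UNIV. gi e a * cn c a)"

lemma gi_proj: "(\<Sum>c\<in>UNIV. gi a c * proj e c) = proj_up a e"
proof -
  have "(\<Sum>c\<in>UNIV. gi a c * proj e c) = gi a e - eps * nu e * (\<Sum>c\<in>UNIV. gi a c * nl c)"
    unfolding proj_def by (simp add: right_diff_distrib sum_subtractf sum_distrib_left mult_ac)
  then show ?thesis
    by (simp add: proj_up_def flip: nu_def)
qed

lemma proj_up_E: "(\<Sum>a\<in>UNIV. proj_up a e * E a b) = (\<Sum>a\<in>UNIV. gi a e * E a b)"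
proof -
  have "(\<Sum>a\<in>UNIV. proj_up a e * E a b) = (\<Sum>a\<in>UNIV. gi a e * E a b) - eps * nu e * (\<Sum>a\<in>UNIV. nu a * E a b)"
    unfolding proj_up_def by (simp add: algebra_simps sum_subtractf sum_distrib_left)
  then show ?thesis by (simp add: normal_E)
qed

lemma proj_E: "(\<Sum>f\<in>UNIV. proj f b * E e f) = E e b"
proof -
  have "(\<Sum>f\<in>UNIV. proj f b * E e f) = E e b - eps * nl b * (\<Sum>f\<in>UNIV. nu f * E f e)"
    unfolding proj_def by (simp add: algebra_simps sum_subtractf sum_distrib_left E_sym)
  then show ?thesis by (simp add: normal_E)
qed

lemma trace_dnu_E:
  assumes cE_sym: "\<And>c e b. cE c e b = cE c b e"
  shows "(\<Sum>c\<in>UNIV. \<Sum>b\<in>UNIV. \<Sum>e\<in>UNIV. gi c b * dnu c e * E e b) = 0"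
proof -
  have "(\<Sum>c\<in>UNIV. \<Sum>b\<in>UNIV. gi c b * (\<Sum>e\<in>UNIV. dnu c e * E e b + nu e * cE c e b)) = 0"
    using leibniz by (simp add: dnu_def)
  moreover have "(\<Sum>c\<in>UNIV. \<Sum>b\<in>UNIV. gi c b * (\<Sum>e\<in>UNIV. nu e * cE c e b))
      = (\<Sum>e\<in>UNIV. nu e * (\<Sum>b\<in>UNIV. \<Sum>c\<in>UNIV. gi b c * cE c b e))"
  proof -
    have "(\<Sum>c\<in>UNIV. \<Sum>b\<in>UNIV. gi c b * (\<Sum>e\<in>UNIV. nu e * cE c e b))
        = (\<Sum>e\<in>UNIV. \<Sum>c\<in>UNIV. \<Sum>b\<in>UNIV. nu e * (gi c b * cE c e b))"
      by (simp add: sum_distrib_left mult_ac sum3_cab[of "\<lambda>c b e. nu e * (gi c b * cE c e b)"])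
    also have "\<dots> = (\<Sum>e\<in>UNIV. nu e * (\<Sum>b\<in>UNIV. \<Sum>c\<in>UNIV. gi b c * cE c b e))"
      by (simp add: sum_distrib_left) (subst (2) sum.swap, simp add: gi_sym cE_sym)
    finally show ?thesis .
  qed
  ultimately show ?thesis
    using div_E by (simp add: distrib_left sum.distrib sum_distrib_left mult_ac)
qed

text \<open>Since \<open>E\<close> is orthogonal to \<open>n\<close>, only the part \<open>g\<^sup>a\<^sup>c \<nabla>\<^sub>c n\<^sup>b E\<^sub>a\<^sub>b\<close> of
  \<open>K\<^sup>a\<^sup>b E\<^sub>a\<^sub>b\<close> survives, and by the Leibniz rule it equals \<open>- n\<^sup>b \<nabla>\<^sup>a E\<^sub>a\<^sub>b = 0\<close>.\<close>

lemma extrinsic_trace: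
  assumes cE_sym: "\<And>c e b. cE c e b = cE c b e"
  shows "(\<Sum>a\<in>UNIV. \<Sum>b\<in>UNIV. (\<Sum>c\<in>UNIV. \<Sum>d\<in>UNIV. gi a c * gi b d *
           (\<Sum>e\<in>UNIV. proj e c * cn e d)) * E a b) = 0"
proof -
  have raised: "(\<Sum>c\<in>UNIV. \<Sum>d\<in>UNIV. gi a c * gi b d * (\<Sum>e\<in>UNIV. proj e c * cn e d))
      = (\<Sum>e\<in>UNIV. proj_up a e * dnu e b)" for a b
  proof -
    have "(\<Sum>c\<in>UNIV. \<Sum>d\<in>UNIV. gi a c * gi b d * (\<Sum>e\<in>UNIV. proj e c * cn e d))
        = (\<Sum>c\<in>UNIV. \<Sum>d\<in>UNIV. \<Sum>e\<in>UNIV. gi a c * proj e c * (gi b d * cn e d))"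
      by (simp add: sum_distrib_left mult_ac)
    also have "\<dots> = (\<Sum>c\<in>UNIV. \<Sum>e\<in>UNIV. gi a c * proj e c * dnu e b)"
      by (subst sum3_acb) (simp add: dnu_def sum_distrib_left)
    also have "\<dots> = (\<Sum>e\<in>UNIV. proj_up a e * dnu e b)"
      by (subst sum.swap) (simp add: gi_proj flip: sum_distrib_right)
    finally show ?thesis .
  qed
  have "(\<Sum>a\<in>UNIV. \<Sum>b\<in>UNIV. (\<Sum>e\<in>UNIV. proj_up a e * dnu e b) * E a b)
      = (\<Sum>a\<in>UNIV. \<Sum>b\<in>UNIV. \<Sum>e\<in>UNIV. dnu e b * (proj_up a e * E a b))"
    by (simp add: sum_distrib_right sum_distrib_left mult_ac)
  also have "\<dots> = (\<Sum>b\<in>UNIV. \<Sum>e\<in>UNIV. dnu e b * (\<Sum>a\<in>UNIV. proj_up a e * E a b))"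
    by (subst sum3_bca) (simp add: sum_distrib_left)
  also have "\<dots> = (\<Sum>b\<in>UNIV. \<Sum>e\<in>UNIV. \<Sum>a\<in>UNIV. dnu e b * gi a e * E a b)"
    by (simp only: proj_up_E) (simp add: sum_distrib_left mult_ac)
  also have "\<dots> = (\<Sum>c\<in>UNIV. \<Sum>b\<in>UNIV. \<Sum>e\<in>UNIV. gi c b * dnu c e * E e b)"
    by (subst sum3_bca) (simp add: gi_sym E_sym mult_ac)
  finally show ?thesis
    using trace_dnu_E[OF cE_sym] by (simp add: raised)
qed

lemma proj_up_sym: "proj_up a c = proj_up c a"
  unfolding proj_up_def by (simp add: gi_sym mult_ac)

lemma proj_up_proj:
  assumes "eps * eps = 1" "(\<Sum>a\<in>UNIV. nu a * nl a) = eps"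
  shows "(\<Sum>c\<in>UNIV. proj_up a c * proj d c) = proj_up a d"
proof -
  have "(\<Sum>c\<in>UNIV. proj_up a c * proj d c) = gi a d - eps * nu d * (\<Sum>c\<in>UNIV. gi a c * nl c)
      - eps * nu a * nu d + eps * eps * nu a * nu d * (\<Sum>c\<in>UNIV. nu c * nl c)"
    unfolding proj_up_def proj_def
    by (simp add: algebra_simps sum.distrib sum_subtractf sum_distrib_left mult_if_zero_right mult_if_zero_left)
  then show ?thesis
    using assms by (simp add: proj_up_def flip: nu_def)
qed

lemma project_twice:
  assumes "eps * eps = 1" "(\<Sum>a\<in>UNIV. nu a * nl a) = eps"
  shows "(\<Sum>a\<in>UNIV. \<Sum>c\<in>UNIV. proj_up a c * (\<Sum>d\<in>UNIV. \<Sum>e\<in>UNIV. \<Sum>f\<in>UNIV. proj d c * proj e a * proj f b * cE d e f))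
    = (\<Sum>f\<in>UNIV. proj f b * (\<Sum>d\<in>UNIV. \<Sum>e\<in>UNIV. proj_up e d * cE d e f))"
proof -
  define Z where "Z d e = (\<Sum>f\<in>UNIV. proj f b * cE d e f)" for d e
  have "(\<Sum>d\<in>UNIV. \<Sum>e\<in>UNIV. \<Sum>f\<in>UNIV. proj d c * proj e a * proj f b * cE d e f)
      = (\<Sum>d\<in>UNIV. proj d c * (\<Sum>e\<in>UNIV. proj e a * Z d e))" for c a
    unfolding Z_def by (simp add: sum_distrib_left mult_ac)
  moreover have "(\<Sum>c\<in>UNIV. proj_up a c * (\<Sum>d\<in>UNIV. proj d c * Y d)) = (\<Sum>d\<in>UNIV. proj_up a d * Y d)"
    for a and Y :: "'i \<Rightarrow> real"
  proof -
    have "(\<Sum>c\<in>UNIV. proj_up a c * (\<Sum>d\<in>UNIV. proj d c * Y d)) = (\<Sum>c\<in>UNIV. \<Sum>d\<in>UNIV. proj_up a c * proj d c * Y d)"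
      by (simp add: sum_distrib_left mult_ac)
    also have "\<dots> = (\<Sum>d\<in>UNIV. (\<Sum>c\<in>UNIV. proj_up a c * proj d c) * Y d)"
      by (subst sum.swap) (simp add: sum_distrib_right)
    finally show ?thesis by (simp add: proj_up_proj[OF assms])
  qed
  moreover have "(\<Sum>a\<in>UNIV. \<Sum>d\<in>UNIV. proj_up a d * (\<Sum>e\<in>UNIV. proj e a * Z d e))
      = (\<Sum>d\<in>UNIV. \<Sum>e\<in>UNIV. proj_up e d * Z d e)"
  proof -
    have "(\<Sum>a\<in>UNIV. \<Sum>d\<in>UNIV. proj_up a d * (\<Sum>e\<in>UNIV. proj e a * Z d e))
        = (\<Sum>a\<in>UNIV. \<Sum>d\<in>UNIV. \<Sum>e\<in>UNIV. proj_up a d * proj e a * Z d e)"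
      by (simp add: sum_distrib_left mult_ac)
    also have "\<dots> = (\<Sum>d\<in>UNIV. \<Sum>e\<in>UNIV. \<Sum>a\<in>UNIV. proj_up a d * proj e a * Z d e)"
      by (rule sum3_bca)
    also have "\<dots> = (\<Sum>d\<in>UNIV. \<Sum>e\<in>UNIV. (\<Sum>a\<in>UNIV. proj_up d a * proj e a) * Z d e)"
      by (simp add: sum_distrib_right proj_up_sym)
    finally show ?thesis by (simp add: proj_up_proj[OF assms] proj_up_sym)
  qed
  moreover have "(\<Sum>d\<in>UNIV. \<Sum>e\<in>UNIV. proj_up e d * Z d e)
      = (\<Sum>f\<in>UNIV. proj f b * (\<Sum>d\<in>UNIV. \<Sum>e\<in>UNIV. proj_up e d * cE d e f))"
  proof -
    have "(\<Sum>d\<in>UNIV. \<Sum>e\<in>UNIV. proj_up e d * Z d e)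
        = (\<Sum>d\<in>UNIV. \<Sum>e\<in>UNIV. \<Sum>f\<in>UNIV. proj f b * (proj_up e d * cE d e f))"
      unfolding Z_def by (simp add: sum_distrib_left mult_ac)
    also have "\<dots> = (\<Sum>f\<in>UNIV. \<Sum>d\<in>UNIV. \<Sum>e\<in>UNIV. proj f b * (proj_up e d * cE d e f))"
      by (rule sum3_cab)
    finally show ?thesis
      by (simp add: sum_distrib_left)
  qed
  ultimately show ?thesis
    by simp
qed

lemma projected_trace_cE:
  "(\<Sum>d\<in>UNIV. \<Sum>e\<in>UNIV. proj_up e d * cE d e f)
    = eps * (\<Sum>e\<in>UNIV. (\<Sum>c\<in>UNIV. gi e c * (\<Sum>d\<in>UNIV. nu d * cn d c)) * E e f)"
proof -
  have "(\<Sum>d\<in>UNIV. \<Sum>e\<in>UNIV. proj_up e d * cE d e f)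
      = (\<Sum>d\<in>UNIV. \<Sum>e\<in>UNIV. gi e d * cE d e f) - eps * (\<Sum>d\<in>UNIV. nu d * (\<Sum>e\<in>UNIV. nu e * cE d e f))"
    unfolding proj_up_def by (simp add: algebra_simps sum_subtractf sum_distrib_left)
  moreover have "(\<Sum>d\<in>UNIV. \<Sum>e\<in>UNIV. gi e d * cE d e f) = 0"
    using div_E[of f] by (subst sum.swap) simp
  moreover have "(\<Sum>e\<in>UNIV. nu e * cE d e f) = - (\<Sum>e\<in>UNIV. dnu d e * E e f)" for d
    using leibniz[of d f] by (simp add: dnu_def sum.distrib eq_neg_iff_add_eq_0 add.commute)
  moreover have "(\<Sum>d\<in>UNIV. nu d * (\<Sum>e\<in>UNIV. dnu d e * E e f))
      = (\<Sum>e\<in>UNIV. (\<Sum>c\<in>UNIV. gi e c * (\<Sum>d\<in>UNIV. nu d * cn d c)) * E e f)"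
  proof -
    have "(\<Sum>d\<in>UNIV. nu d * (\<Sum>e\<in>UNIV. dnu d e * E e f))
        = (\<Sum>d\<in>UNIV. \<Sum>e\<in>UNIV. \<Sum>a\<in>UNIV. gi e a * (nu d * cn d a) * E e f)"
      unfolding dnu_def by (simp add: sum_distrib_left sum_distrib_right mult_ac)
    also have "\<dots> = (\<Sum>e\<in>UNIV. \<Sum>a\<in>UNIV. \<Sum>d\<in>UNIV. gi e a * (nu d * cn d a) * E e f)"
      by (rule sum3_bca)
    finally show ?thesis
      by (simp add: sum_distrib_left sum_distrib_right mult_ac)
  qed
  ultimately show ?thesis
    by (simp add: sum_negf)
qed

text \<open>Projecting \<open>\<nabla>E\<close> onto the level surfaces leaves, besides \<open>\<nabla>\<^sup>a E\<^sub>a\<^sub>b = 0\<close>, only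
  the term \<open>n\<^sup>d n\<^sup>e \<nabla>\<^sub>d E\<^sub>e\<^sub>b\<close>, which the Leibniz rule turns into the acceleration term.\<close>

lemma spatial_divergence:
  assumes "eps * eps = 1" "(\<Sum>a\<in>UNIV. nu a * nl a) = eps"
  shows "(\<Sum>a\<in>UNIV. \<Sum>c\<in>UNIV. proj_up a c * (\<Sum>d\<in>UNIV. \<Sum>e\<in>UNIV. \<Sum>f\<in>UNIV. proj d c * proj e a * proj f b * cE d e f))
     - eps * (\<Sum>a\<in>UNIV. (\<Sum>c\<in>UNIV. gi a c * (\<Sum>e\<in>UNIV. nu e * cn e c)) * E a b) = 0"
proof -
  define acc where "acc e = (\<Sum>c\<in>UNIV. gi e c * (\<Sum>d\<in>UNIV. nu d * cn d c))" for e
  have "(\<Sum>f\<in>UNIV. proj f b * (eps * (\<Sum>e\<in>UNIV. acc e * E e f)))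
      = eps * (\<Sum>e\<in>UNIV. acc e * (\<Sum>f\<in>UNIV. proj f b * E e f))"
    by (simp add: sum_distrib_left mult_ac) (subst sum.swap, rule refl)
  then show ?thesis
    unfolding project_twice[OF assms] projected_trace_cE acc_def[symmetric] by (simp add: proj_E)
qed

end

section \<open>Curvature of a metric chart\<close>

definition metric_matrix :: "(real^'d \<Rightarrow> 'd::finite \<Rightarrow> 'd \<Rightarrow> real) \<Rightarrow> real^'d \<Rightarrow> real^'d^'d" where
  "metric_matrix g x = (\<chi> i j. g x i j)"

locale metric_chart =
  fixes U :: "(real^'d::finite) set" and g :: "real^'d \<Rightarrow> 'd \<Rightarrow> 'd \<Rightarrow> real"
  assumes open_U: "open U"
    and smooth_metric [simp]: "\<And>a b. smooth_on U (\<lambda>x. g x a b)"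
    and metric_sym: "\<And>x a b. x \<in> U \<Longrightarrow> g x a b = g x b a"
    and metric_signature: "\<And>x. x \<in> U \<Longrightarrow> eucl_or_lorentz g x"
begin

text \<open>Both signatures are nondegenerate: a kernel vector \<open>v\<close> would be
  \<open>g\<close>-orthogonal to everything, in particular to itself and to the timelike direction.\<close>

lemma metric_matrix_kernel:
  assumes x: "x \<in> U" and v: "metric_matrix g x *v v = 0"
  shows "v = 0"
proof (rule ccontr)
  assume "v \<noteq> 0"
  have row: "(\<Sum>b\<in>UNIV. g x a b * v $ b) = 0" for a
    using v by (simp add: metric_matrix_def matrix_vector_mult_def vec_eq_iff)
  have "qform g x w v = (\<Sum>a\<in>UNIV. w $ a * (\<Sum>b\<in>UNIV. g x a b * v $ b))" for w
    unfolding qform_def by (simp add: sum_distrib_left mult_ac)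
  then have "qform g x w v = 0" for w
    using row by simp
  with metric_signature[OF x] \<open>v \<noteq> 0\<close> show False
    unfolding eucl_or_lorentz_def by (metis less_irrefl)
qed

lemma metric_matrix_invertible: "x \<in> U \<Longrightarrow> invertible (metric_matrix g x)"
  using metric_matrix_kernel invertible_left_inverse matrix_left_invertible_ker by blast

lemma metric_matrix_inverse:
  "x \<in> U \<Longrightarrow> metric_matrix g x ** matrix_inv (metric_matrix g x) = mat 1
    \<and> matrix_inv (metric_matrix g x) ** metric_matrix g x = mat 1"
  using metric_matrix_invertible[unfolded invertible_def] unfolding matrix_inv_def by (rule someI_ex)

lemma ginv_eq_matrix_inv: "ginv g x a b = matrix_inv (metric_matrix g x) $ a $ b"
  by (simp add: ginv_def metric_matrix_def)

lemma metric_ginv: "x \<in> U \<Longrightarrow> (\<Sum>b\<in>UNIV. g x a b * ginv g x b c) = (if a = c then 1 else 0)"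
  using metric_matrix_inverse[of x] unfolding ginv_eq_matrix_inv
  by (auto simp: vec_eq_iff matrix_matrix_mult_def mat_def metric_matrix_def)

lemma ginv_metric: "x \<in> U \<Longrightarrow> (\<Sum>b\<in>UNIV. ginv g x a b * g x b c) = (if a = c then 1 else 0)"
  using metric_matrix_inverse[of x] unfolding ginv_eq_matrix_inv
  by (auto simp: vec_eq_iff matrix_matrix_mult_def mat_def metric_matrix_def)

lemma ginv_sym: "x \<in> U \<Longrightarrow> ginv g x a b = ginv g x b a"
proof -
  assume x: "x \<in> U"
  define M where "M = metric_matrix g x"
  define X where "X = matrix_inv M"
  have inv: "M ** X = mat 1" "X ** M = mat 1"
    using metric_matrix_inverse[OF x] by (auto simp: M_def X_def)
  have "transpose M = M"
    using metric_sym[OF x] by (simp add: vec_eq_iff transpose_def M_def metric_matrix_def)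
  have "transpose X ** M = transpose (transpose M ** X)"
    by (simp add: matrix_transpose_mul)
  also have "\<dots> = mat 1"
    using inv \<open>transpose M = M\<close> by (simp add: transpose_mat)
  finally have "transpose X ** M = mat 1" .
  then have "transpose X = transpose X ** (M ** X)"
    using inv by simp
  also have "\<dots> = X"
    using \<open>transpose X ** M = mat 1\<close> by (simp add: matrix_mul_assoc)
  finally have "transpose X $ b $ a = X $ b $ a" by simp
  then show ?thesis unfolding ginv_eq_matrix_inv X_def M_def by (simp add: transpose_def)
qed

lemma ginv_cramer:
  assumes x: "x \<in> U"
  shows "ginv g x a b =
    det (\<chi> i j. if j = a then (if i = b then 1 else 0) else g x i j) / det (\<chi> i j. g x i j)"
proof -
  define M where "M = metric_matrix g x"
  define X where "X = matrix_inv M"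
  have "det M \<noteq> 0"
    using metric_matrix_invertible[OF x] invertible_det_nz M_def by blast
  moreover have "M *v (X *v axis b 1) = axis b 1"
    using metric_matrix_inverse[OF x] by (simp add: matrix_vector_mul_assoc M_def X_def)
  ultimately have "X *v axis b 1 = (\<chi> k. det (\<chi> i j. if j = k then (axis b 1) $ i else M $ i $ j) / det M)"
    using cramer by blast
  moreover have "(X *v axis b 1) $ a = X $ a $ b"
    by (simp add: matrix_vector_mult_def axis_def)
  moreover have "(\<chi> i j. if j = a then (axis b 1) $ i else M $ i $ j)
      = (\<chi> i j. if j = a then (if i = b then 1 else 0) else g x i j)"
    by (simp add: vec_eq_iff axis_def M_def metric_matrix_def)
  ultimately show ?thesis
    unfolding ginv_eq_matrix_inv X_def M_def by (simp add: metric_matrix_def)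
qed

lemma smooth_ginv [simp]: "smooth_on U (\<lambda>x. ginv g x a b)"
proof (rule smooth_on_cong_open[OF open_U])
  have "det (metric_matrix g x) \<noteq> 0" if "x \<in> U" for x
    using metric_matrix_invertible[OF that] invertible_det_nz by blast
  moreover have "smooth_on U (\<lambda>x. if j = a then (if i = b then 1 else 0) else g x i j)" for i j
    by (cases "j = a") (simp_all add: smooth_on_const)
  ultimately show "smooth_on U (\<lambda>x. det (\<chi> i j. if j = a then (if i = b then 1 else 0) else g x i j)
      / det (\<chi> i j. g x i j))"
    unfolding metric_matrix_def by (intro smooth_on_divide open_U smooth_on_det) auto
qed (simp add: ginv_cramer)

lemma chart_smooth_add [simp]: "smooth_on U f \<Longrightarrow> smooth_on U h \<Longrightarrow> smooth_on U (\<lambda>y. f y + h y)"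
  and chart_smooth_diff [simp]: "smooth_on U f \<Longrightarrow> smooth_on U h \<Longrightarrow> smooth_on U (\<lambda>y. f y - h y)"
  and chart_smooth_mult [simp]: "smooth_on U f \<Longrightarrow> smooth_on U h \<Longrightarrow> smooth_on U (\<lambda>y. f y * h y)"
  and chart_smooth_divide_const [simp]: "smooth_on U f \<Longrightarrow> smooth_on U (\<lambda>y. f y / c)"
  and chart_smooth_sum [simp]: "(\<And>a. smooth_on U (F a)) \<Longrightarrow> smooth_on U (\<lambda>y. \<Sum>a\<in>UNIV. (F :: 'd \<Rightarrow> _) a y)"
  by (auto intro: smooth_on_add smooth_on_diff smooth_on_mult smooth_on_divide_const smooth_on_sum open_U)

lemmas [simp] = smooth_on_const smooth_on_pd

lemma smooth_christoffel [simp]: "smooth_on U (\<lambda>y. christoffel g y k i j)"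
  unfolding christoffel_def by simp

lemma smooth_riemann [simp]: "smooth_on U (\<lambda>y. riemann g y r s m v)"
  unfolding riemann_def by simp

lemma smooth_ricci [simp]: "smooth_on U (\<lambda>y. ricci g y s v)"
  unfolding ricci_def by simp

lemma smooth_scalar_curv [simp]: "smooth_on U (\<lambda>y. scalar_curv g y)"
  unfolding scalar_curv_def by simp

lemma smooth_einstein [simp]: "smooth_on U (\<lambda>y. einstein g y a b)"
  unfolding einstein_def by simp

lemma pd_smooth_add: "x \<in> U \<Longrightarrow> smooth_on U f \<Longrightarrow> smooth_on U h \<Longrightarrow> pd i (\<lambda>y. f y + h y) x = pd i f x + pd i h x"
  and pd_smooth_diff: "x \<in> U \<Longrightarrow> smooth_on U f \<Longrightarrow> smooth_on U h \<Longrightarrow> pd i (\<lambda>y. f y - h y) x = pd i f x - pd i h x"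
  and pd_smooth_mult: "x \<in> U \<Longrightarrow> smooth_on U f \<Longrightarrow> smooth_on U h \<Longrightarrow> pd i (\<lambda>y. f y * h y) x = pd i f x * h x + f x * pd i h x"
  and pd_smooth_divide_const: "x \<in> U \<Longrightarrow> smooth_on U f \<Longrightarrow> pd i (\<lambda>y. f y / c) x = pd i f x / c"
  by (auto intro: pd_add pd_diff pd_mult pd_divide_const smooth_on_differentiable)

lemma pd_smooth_sum:
  "x \<in> U \<Longrightarrow> (\<And>a. smooth_on U (F a)) \<Longrightarrow> pd i (\<lambda>y. \<Sum>a\<in>UNIV. (F :: 'd \<Rightarrow> _) a y) x = (\<Sum>a\<in>UNIV. pd i (F a) x)"
  by (rule pd_sum) (auto intro: smooth_on_differentiable)

lemmas pd_smooth_rules = pd_smooth_add pd_smooth_diff pd_smooth_mult pd_smooth_divide_const pd_smooth_sum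

lemma pd_metric_sym: "y \<in> U \<Longrightarrow> pd c (\<lambda>z. g z a b) y = pd c (\<lambda>z. g z b a) y"
  by (rule pd_cong_open[OF open_U]) (auto simp: metric_sym)

lemma christoffel_sym: "y \<in> U \<Longrightarrow> christoffel g y k i j = christoffel g y k j i"
  unfolding christoffel_def using pd_metric_sym[of y l i j for l] by (simp add: add.commute)

lemma pd_christoffel_sym:
  "y \<in> U \<Longrightarrow> pd e (\<lambda>z. christoffel g z k i j) y = pd e (\<lambda>z. christoffel g z k j i) y"
  by (rule pd_cong_open[OF open_U]) (auto simp: christoffel_sym)

lemma pd_metric_christoffel:
  "y \<in> U \<Longrightarrow> pd c (\<lambda>z. g z a b) y =
     (\<Sum>d\<in>UNIV. christoffel g y d c a * g y d b) + (\<Sum>d\<in>UNIV. christoffel g y d c b * g y a d)"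
  by (rule metric_compatibility_components[where gi = "ginv g y"])
    (auto simp: metric_sym metric_ginv pd_metric_sym christoffel_def)

lemma pd_ginv:
  assumes y: "y \<in> U"
  shows "pd c (\<lambda>z. ginv g z a b) y =
    - (\<Sum>d\<in>UNIV. christoffel g y a c d * ginv g y d b) - (\<Sum>d\<in>UNIV. christoffel g y b c d * ginv g y a d)"
proof (rule inverse_metric_derivative_components[where g = "g y" and dg = "\<lambda>c a b. pd c (\<lambda>z. g z a b) y"])
  fix c p b
  have "pd c (\<lambda>z. \<Sum>q\<in>UNIV. g z p q * ginv g z q b) y = pd c (\<lambda>z. if p = b then 1 else 0) y"
    by (rule pd_cong_open[OF open_U y]) (simp add: metric_ginv)
  then show "(\<Sum>q\<in>UNIV. pd c (\<lambda>z. g z p q) y * ginv g y q b + g y p q * pd c (\<lambda>z. ginv g z q b) y) = 0"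
    using y by (simp add: pd_smooth_rules)
qed (rule metric_sym[OF y] ginv_sym[OF y] metric_ginv[OF y] ginv_metric[OF y] pd_metric_christoffel[OF y])+

lemma pd_riemann:
  "x \<in> U \<Longrightarrow> pd e (\<lambda>y. riemann g y r s m v) x =
    pd e (pd m (\<lambda>y. christoffel g y r v s)) x - pd e (pd v (\<lambda>y. christoffel g y r m s)) x
    + (\<Sum>l\<in>UNIV. pd e (\<lambda>y. christoffel g y r m l) x * christoffel g x l v s
                 + christoffel g x r m l * pd e (\<lambda>y. christoffel g y l v s) x)
    - (\<Sum>l\<in>UNIV. pd e (\<lambda>y. christoffel g y r v l) x * christoffel g x l m s
                 + christoffel g x r v l * pd e (\<lambda>y. christoffel g y l m s) x)"
  unfolding riemann_def by (simp add: pd_smooth_rules)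

lemma riemann_antisym: "riemann g y r s m v = - riemann g y r s v m"
  by (simp add: riemann_def)

lemma lowered_riemann_antisym:
  assumes y: "y \<in> U"
  shows "(\<Sum>d\<in>UNIV. g y b d * riemann g y d a m v) + (\<Sum>d\<in>UNIV. g y a d * riemann g y d b m v) = 0"
proof (rule lowered_riemann_antisym_components[where dg = "\<lambda>c a b. pd c (\<lambda>z. g z a b) y"
      and G = "christoffel g y" and dG = "\<lambda>e k i j. pd e (\<lambda>z. christoffel g z k i j) y"
      and ddg = "\<lambda>m c a b. pd m (pd c (\<lambda>z. g z a b)) y"])
  fix m c a b
  show "pd m (pd c (\<lambda>z. g z a b)) y = pd c (pd m (\<lambda>z. g z a b)) y"
    by (rule pd_commute[OF open_U smooth_metric y])
  have "pd m (pd c (\<lambda>z. g z a b)) y = pd m (\<lambda>z. (\<Sum>d\<in>UNIV. christoffel g z d c a * g z d b)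
      + (\<Sum>d\<in>UNIV. christoffel g z d c b * g z a d)) y"
    by (rule pd_cong_open[OF open_U y]) (simp add: pd_metric_christoffel)
  then show "pd m (pd c (\<lambda>z. g z a b)) y =
      (\<Sum>d\<in>UNIV. pd m (\<lambda>z. christoffel g z d c a) y * g y d b + christoffel g y d c a * pd m (\<lambda>z. g z d b) y)
    + (\<Sum>d\<in>UNIV. pd m (\<lambda>z. christoffel g z d c b) y * g y a d + christoffel g y d c b * pd m (\<lambda>z. g z a d) y)"
    using y by (simp add: pd_smooth_rules)
qed (rule metric_sym[OF y] pd_metric_christoffel[OF y] riemann_def)+

lemma riemann_trace_ricci:
  "y \<in> U \<Longrightarrow> (\<Sum>e\<in>UNIV. \<Sum>s\<in>UNIV. ginv g y e s * riemann g y l s v e) = (\<Sum>p\<in>UNIV. ginv g y l p * ricci g y p v)"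
  by (rule riemann_trace_ricci_components[where g = "g y"])
    (assumption | rule ginv_metric lowered_riemann_antisym riemann_antisym ricci_def)+

lemma riemann_trace_zero: "y \<in> U \<Longrightarrow> (\<Sum>r\<in>UNIV. riemann g y r r m v) = 0"
  by (rule riemann_trace_zero_components[where g = "g y" and gi = "ginv g y"])
    (assumption | rule ginv_metric ginv_sym lowered_riemann_antisym)+

lemma ricci_sym: "y \<in> U \<Longrightarrow> ricci g y s v = ricci g y v s"
  unfolding ricci_def
  by (rule ricci_sym_components[where G = "christoffel g y" and dG = "\<lambda>e k i j. pd e (\<lambda>z. christoffel g z k i j) y"])
    (assumption | rule christoffel_sym pd_christoffel_sym riemann_def riemann_trace_zero)+

lemma einstein_sym: "y \<in> U \<Longrightarrow> einstein g y a b = einstein g y b a"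
  by (simp add: einstein_def ricci_sym metric_sym)

lemma divg_einstein:
  assumes x: "x \<in> U"
  shows "divg g (einstein g) x b = 0"
proof -
  have "pd r (\<lambda>y. \<Sum>e\<in>UNIV. \<Sum>s\<in>UNIV. ginv g y e s * riemann g y r s v e) x
      = pd r (\<lambda>y. \<Sum>p\<in>UNIV. ginv g y r p * ricci g y p v) x" for r v
    by (rule pd_cong_open[OF open_U x]) (simp add: riemann_trace_ricci)
  then have pd_riemann_trace_ricci:
    "(\<Sum>e\<in>UNIV. \<Sum>s\<in>UNIV. pd r (\<lambda>y. ginv g y e s) x * riemann g x r s v e
        + ginv g x e s * pd r (\<lambda>y. riemann g y r s v e) x)
     = (\<Sum>p\<in>UNIV. pd r (\<lambda>y. ginv g y r p) x * ricci g x p v + ginv g x r p * pd r (\<lambda>y. ricci g y p v) x)"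
    for r v
    using x by (simp add: pd_smooth_rules)
  interpret metric_curvature_components "christoffel g x"
      "\<lambda>e k i j. pd e (\<lambda>y. christoffel g y k i j) x" "\<lambda>f e k i j. pd f (pd e (\<lambda>y. christoffel g y k i j)) x"
      "riemann g x" "\<lambda>e r s m v. pd e (\<lambda>y. riemann g y r s m v) x"
      "g x" "ginv g x" "ricci g x" "\<lambda>c a b. pd c (\<lambda>y. g y a b) x" "\<lambda>c a b. pd c (\<lambda>y. ginv g y a b) x"
      "\<lambda>e s v. pd e (\<lambda>y. ricci g y s v) x" "\<lambda>c. pd c (\<lambda>y. scalar_curv g y) x"
    by unfold_locales
      (rule pd_commute[OF open_U smooth_christoffel x] christoffel_sym[OF x] riemann_def pd_riemann[OF x]
          ginv_sym[OF x] ginv_metric[OF x] pd_metric_christoffel[OF x] pd_ginv[OF x] ricci_def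
          riemann_trace_ricci[OF x] pd_riemann_trace_ricci
        | use x in \<open>simp add: ricci_def scalar_curv_def pd_smooth_rules\<close>)+
  show ?thesis
    unfolding divg_def cov2_def
    by (rule contracted_bianchi[where Scal = "scalar_curv g x"])
      (use x in \<open>simp_all add: einstein_def pd_smooth_rules field_simps\<close>)
qed

end

section \<open>The foliation and the constraints\<close>

locale foliated_chart = metric_chart +
  fixes \<sigma> :: "real^'d \<Rightarrow> real" and \<epsilon> :: real
  assumes smooth_foliation [simp]: "smooth_on U \<sigma>"
    and sign_normal: "\<epsilon> = 1 \<or> \<epsilon> = -1"
    and sign_gradsq: "\<And>x. x \<in> U \<Longrightarrow> \<epsilon> * gradsq g \<sigma> x > 0"
begin

lemma abs_gradsq: "x \<in> U \<Longrightarrow> \<bar>gradsq g \<sigma> x\<bar> = \<epsilon> * gradsq g \<sigma> x"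
  using sign_normal sign_gradsq[of x] by auto

lemma smooth_nlow [simp]: "smooth_on U (\<lambda>y. nlow g \<sigma> y a)"
proof (rule smooth_on_cong_open[OF open_U])
  have "smooth_on U (\<lambda>y. \<epsilon> * gradsq g \<sigma> y)"
    unfolding gradsq_def by simp
  then have "smooth_on U (\<lambda>y. sqrt (\<epsilon> * gradsq g \<sigma> y))"
    by (rule smooth_on_sqrt[OF open_U]) (rule sign_gradsq)
  moreover have "sqrt (\<epsilon> * gradsq g \<sigma> y) \<noteq> 0" if "y \<in> U" for y
    using sign_gradsq[OF that] by (metis less_irrefl real_sqrt_eq_zero_cancel_iff)
  ultimately show "smooth_on U (\<lambda>y. pd a \<sigma> y / sqrt (\<epsilon> * gradsq g \<sigma> y))"
    by (intro smooth_on_divide[OF open_U]) auto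
qed (simp add: nlow_def abs_gradsq)

lemma smooth_nup [simp]: "smooth_on U (\<lambda>y. nup g \<sigma> y a)"
  unfolding nup_def by simp

lemma nup_nlow_contraction: "x \<in> U \<Longrightarrow> (\<Sum>a\<in>UNIV. nup g \<sigma> x a * nlow g \<sigma> x a) = \<epsilon>"
proof -
  assume x: "x \<in> U"
  define s where "s = sqrt \<bar>gradsq g \<sigma> x\<bar>"
  have nlow_s: "nlow g \<sigma> x a = pd a \<sigma> x / s" for a
    by (simp add: nlow_def s_def)
  have "(\<Sum>b\<in>UNIV. ginv g x a b * (pd b \<sigma> x / s)) * (pd a \<sigma> x / s)
      = (\<Sum>b\<in>UNIV. ginv g x a b * pd a \<sigma> x * pd b \<sigma> x / (s * s))" for a
    by (simp add: sum_distrib_right sum_distrib_left sum_divide_distrib[symmetric] mult_ac)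
  then have "(\<Sum>a\<in>UNIV. nup g \<sigma> x a * nlow g \<sigma> x a) = gradsq g \<sigma> x / (s * s)"
    unfolding nup_def nlow_s gradsq_def by (simp add: sum_divide_distrib)
  also have "s * s = \<epsilon> * gradsq g \<sigma> x"
    unfolding s_def using abs_gradsq[OF x] by simp
  finally show ?thesis
    using sign_normal sign_gradsq[OF x] by auto
qed

end

locale vanishing_constraints = foliated_chart +
  fixes cG :: "real^'d \<Rightarrow> 'd \<Rightarrow> 'd \<Rightarrow> real"
  assumes smooth_source [simp]: "\<And>a b. smooth_on U (\<lambda>x. cG x a b)"
    and source_sym: "\<And>x a b. x \<in> U \<Longrightarrow> cG x a b = cG x b a"
    and divg_source: "\<And>x b. x \<in> U \<Longrightarrow> divg g cG x b = 0"
    and hamiltonian_zero: "\<And>x. x \<in> U \<Longrightarrow> E_H g cG \<sigma> x = 0"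
    and momentum_zero: "\<And>x b. x \<in> U \<Longrightarrow> E_M g cG \<sigma> \<epsilon> x b = 0"
begin

lemma smooth_Eten [simp]: "smooth_on U (\<lambda>y. Eten g cG y a b)"
  unfolding Eten_def by simp

lemma Eten_sym: "x \<in> U \<Longrightarrow> Eten g cG x a b = Eten g cG x b a"
  by (simp add: Eten_def einstein_sym source_sym)

lemma normal_Eten_zero: "x \<in> U \<Longrightarrow> (\<Sum>e\<in>UNIV. nup g \<sigma> x e * Eten g cG x e b) = 0"
proof -
  assume x: "x \<in> U"
  have "E_M g cG \<sigma> \<epsilon> x b = (\<Sum>e\<in>UNIV. nup g \<sigma> x e * Eten g cG x e b) - \<epsilon> * nlow g \<sigma> x b * E_H g cG \<sigma> x"
    unfolding E_M_def E_H_def hmix_def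
    by (simp add: algebra_simps sum_subtractf sum_distrib_left mult_if_zero_left mult_if_zero_right)
  then show ?thesis
    using momentum_zero[OF x] hamiltonian_zero[OF x] by simp
qed

lemma hmix_Eten: "x \<in> U \<Longrightarrow> (\<Sum>f\<in>UNIV. hmix g \<sigma> \<epsilon> x f b * Eten g cG x e f) = Eten g cG x e b"
proof -
  assume x: "x \<in> U"
  have "(\<Sum>f\<in>UNIV. hmix g \<sigma> \<epsilon> x f b * Eten g cG x e f)
      = Eten g cG x e b - \<epsilon> * nlow g \<sigma> x b * (\<Sum>f\<in>UNIV. nup g \<sigma> x f * Eten g cG x f e)"
    unfolding hmix_def using Eten_sym[OF x]
    by (simp add: algebra_simps sum_subtractf sum_distrib_left mult_if_zero_left mult_if_zero_right)
  then show ?thesis using normal_Eten_zero[OF x] by simp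
qed

lemma E_EVOL_eq_Eten: "x \<in> U \<Longrightarrow> E_EVOL g cG \<sigma> \<epsilon> \<kappa> x a b = Eten g cG x a b"
  unfolding E_EVOL_def
  by (simp add: hamiltonian_zero hmix_Eten mult.assoc flip: sum_distrib_left)
    (simp add: hmix_Eten Eten_sym[of x _ b])

lemma cov2_E_EVOL_eq: "x \<in> U \<Longrightarrow> cov2 g (E_EVOL g cG \<sigma> \<epsilon> \<kappa>) x = cov2 g (Eten g cG) x"
proof -
  assume x: "x \<in> U"
  have "pd c (\<lambda>y. E_EVOL g cG \<sigma> \<epsilon> \<kappa> y a b) x = pd c (\<lambda>y. Eten g cG y a b) x" for c a b
    by (rule pd_cong_open[OF open_U x]) (simp add: E_EVOL_eq_Eten)
  then show ?thesis
    using x by (simp add: fun_eq_iff cov2_def E_EVOL_eq_Eten)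
qed

lemma cov2_Eten_sym: "x \<in> U \<Longrightarrow> cov2 g (Eten g cG) x c a b = cov2 g (Eten g cG) x c b a"
proof -
  assume x: "x \<in> U"
  have "pd c (\<lambda>y. Eten g cG y a b) x = pd c (\<lambda>y. Eten g cG y b a) x"
    by (rule pd_cong_open[OF open_U x]) (simp add: Eten_sym)
  then show ?thesis unfolding cov2_def using Eten_sym[OF x] by simp
qed

lemma divg_Eten_zero: "x \<in> U \<Longrightarrow> divg g (Eten g cG) x b = 0"
proof -
  assume x: "x \<in> U"
  have "divg g (Eten g cG) x b = divg g (einstein g) x b - divg g cG x b"
    unfolding divg_def cov2_def Eten_def using x
    by (simp add: pd_smooth_diff algebra_simps sum_subtractf sum.distrib)
  then show ?thesis using divg_einstein[OF x] divg_source[OF x] by simp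
qed

text \<open>Differentiating the identity \<open>n\<^sup>e E\<^sub>e\<^sub>b = 0\<close>, which holds on all of
  the open set \<open>U\<close>, gives \<open>(\<nabla>\<^sub>c n\<^sup>e) E\<^sub>e\<^sub>b + n\<^sup>e \<nabla>\<^sub>c E\<^sub>e\<^sub>b = 0\<close>.\<close>

lemma normal_Eten_derivative_zero:
  assumes x: "x \<in> U"
  shows "(\<Sum>e\<in>UNIV. (\<Sum>a\<in>UNIV. ginv g x e a * cov1 g (nlow g \<sigma>) x c a) * Eten g cG x e b
      + nup g \<sigma> x e * cov2 g (Eten g cG) x c e b) = 0"
proof -
  have "pd c (\<lambda>y. \<Sum>e\<in>UNIV. nup g \<sigma> y e * Eten g cG y e b) x = pd c (\<lambda>y. 0) x"
    by (rule pd_cong_open[OF open_U x]) (simp add: normal_Eten_zero)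
  then have "(\<Sum>e\<in>UNIV. (\<Sum>a\<in>UNIV. pd c (\<lambda>y. ginv g y e a) x * nlow g \<sigma> x a
        + ginv g x e a * pd c (\<lambda>y. nlow g \<sigma> y a) x) * Eten g cG x e b
      + nup g \<sigma> x e * pd c (\<lambda>y. Eten g cG y e b) x) = 0"
    unfolding nup_def using x by (simp add: pd_smooth_rules)
  moreover have "(\<Sum>e\<in>UNIV. (\<Sum>a\<in>UNIV. ginv g x e a * cov1 g (nlow g \<sigma>) x c a) * Eten g cG x e b
      + nup g \<sigma> x e * cov2 g (Eten g cG) x c e b)
    = (\<Sum>e\<in>UNIV. (\<Sum>a\<in>UNIV. pd c (\<lambda>y. ginv g y e a) x * nlow g \<sigma> x a
        + ginv g x e a * pd c (\<lambda>y. nlow g \<sigma> y a) x) * Eten g cG x e b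
      + nup g \<sigma> x e * pd c (\<lambda>y. Eten g cG y e b) x)
      - (\<Sum>k\<in>UNIV. christoffel g x k c b * (\<Sum>e\<in>UNIV. nup g \<sigma> x e * Eten g cG x e k))"
    unfolding cov1_def cov2_def
    by (rule normal_contraction_derivative_components[where dgi = "\<lambda>c a b. pd c (\<lambda>y. ginv g y a b) x"])
      (rule pd_ginv[OF x], simp add: nup_def)
  ultimately show ?thesis
    using normal_Eten_zero[OF x] by simp
qed

lemma normal_projection_at:
  assumes x: "x \<in> U"
  shows "normal_projection_components (ginv g x) (Eten g cG x) (nlow g \<sigma> x) (nup g \<sigma> x)
    (cov1 g (nlow g \<sigma>) x) (cov2 g (Eten g cG) x)"
  by unfold_locales
    (rule ginv_sym[OF x] Eten_sym[OF x] normal_Eten_zero[OF x] normal_Eten_derivative_zero[OF x]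
      divg_Eten_zero[OF x, unfolded divg_def] | simp add: nup_def)+

lemma extrinsic_trace_E_EVOL:
  assumes x: "x \<in> U"
  shows "(\<Sum>a\<in>UNIV. \<Sum>b\<in>UNIV. extr_up g \<sigma> \<epsilon> x a b * E_EVOL g cG \<sigma> \<epsilon> \<kappa> x a b) = 0"
proof -
  interpret normal_projection_components "ginv g x" "Eten g cG x" "nlow g \<sigma> x" "nup g \<sigma> x"
      "cov1 g (nlow g \<sigma>) x" "cov2 g (Eten g cG) x" \<epsilon>
    by (rule normal_projection_at[OF x])
  have hmix_eq: "hmix g \<sigma> \<epsilon> x = proj"
    by (simp add: fun_eq_iff hmix_def proj_def)
  show ?thesis
    unfolding E_EVOL_eq_Eten[OF x] extr_up_def extr_def hmix_eq
    by (intro extrinsic_trace cov2_Eten_sym[OF x])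
qed

lemma spatial_divergence_E_EVOL:
  assumes x: "x \<in> U"
  shows "Ddiv g \<sigma> \<epsilon> (E_EVOL g cG \<sigma> \<epsilon> \<kappa>) x b
    - \<epsilon> * (\<Sum>a\<in>UNIV. accel_up g \<sigma> x a * E_EVOL g cG \<sigma> \<epsilon> \<kappa> x a b) = 0"
proof -
  interpret normal_projection_components "ginv g x" "Eten g cG x" "nlow g \<sigma> x" "nup g \<sigma> x"
      "cov1 g (nlow g \<sigma>) x" "cov2 g (Eten g cG) x" \<epsilon>
    by (rule normal_projection_at[OF x])
  have hmix_eq: "hmix g \<sigma> \<epsilon> x = proj" and hup_eq: "hup g \<sigma> \<epsilon> x = proj_up"
    by (simp_all add: fun_eq_iff hmix_def proj_def hup_def proj_up_def)
  have "\<epsilon> * \<epsilon> = 1"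
    using sign_normal by auto
  then show ?thesis
    unfolding Ddiv_def Dspat_def cov2_E_EVOL_eq[OF x] E_EVOL_eq_Eten[OF x] accel_up_def accel_def
      hmix_eq hup_eq
    by (intro spatial_divergence nup_nlow_contraction[OF x])
qed

end

theorem lemma3p2:
  fixes U :: "(real^'d::finite) set"
    and g :: "real^'d \<Rightarrow> 'd \<Rightarrow> 'd \<Rightarrow> real"
    and cG :: "real^'d \<Rightarrow> 'd \<Rightarrow> 'd \<Rightarrow> real"
    and \<sigma> :: "real^'d \<Rightarrow> real"
    and \<epsilon> \<kappa> :: real
  assumes dim: "CARD('d) \<ge> 3"
    and U_open: "open U"
    and g_smooth: "\<And>a b. smooth_on U (\<lambda>x. g x a b)"
    and g_sym: "\<And>x a b. x \<in> U \<Longrightarrow> g x a b = g x b a"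
    and g_sig: "\<And>x. x \<in> U \<Longrightarrow> eucl_or_lorentz g x"
    and \<sigma>_smooth: "smooth_on U \<sigma>"
    and \<sigma>_grad: "\<And>x. x \<in> U \<Longrightarrow> (\<exists>a. pd a \<sigma> x \<noteq> 0)"
    and \<epsilon>_val: "\<epsilon> = 1 \<or> \<epsilon> = -1"
    and \<epsilon>_norm: "\<And>x. x \<in> U \<Longrightarrow> \<epsilon> * gradsq g \<sigma> x > 0"
    and cG_smooth: "\<And>a b. smooth_on U (\<lambda>x. cG x a b)"
    and cG_sym: "\<And>x a b. x \<in> U \<Longrightarrow> cG x a b = cG x b a"
    and cG_div: "\<And>x b. x \<in> U \<Longrightarrow> divg g cG x b = 0"
    and EH0: "\<And>x. x \<in> U \<Longrightarrow> E_H g cG \<sigma> x = 0"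
    and EM0: "\<And>x b. x \<in> U \<Longrightarrow> E_M g cG \<sigma> \<epsilon> x b = 0"
  shows "\<forall>x\<in>U.
     (\<Sum>a\<in>UNIV. \<Sum>b\<in>UNIV. extr_up g \<sigma> \<epsilon> x a b * E_EVOL g cG \<sigma> \<epsilon> \<kappa> x a b) = 0 \<and>
     (\<forall>b. Ddiv g \<sigma> \<epsilon> (E_EVOL g cG \<sigma> \<epsilon> \<kappa>) x b
          - \<epsilon> * (\<Sum>a\<in>UNIV. accel_up g \<sigma> x a * E_EVOL g cG \<sigma> \<epsilon> \<kappa> x a b) = 0)"
proof -
  interpret vanishing_constraints U g \<sigma> \<epsilon> cG
    using U_open g_smooth g_sym g_sig \<sigma>_smooth \<epsilon>_val \<epsilon>_norm cG_smooth cG_sym cG_div EH0 EM0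
    by unfold_locales auto
  show ?thesis
    using extrinsic_trace_E_EVOL spatial_divergence_E_EVOL by blast
qed

end
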